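(* Let $P\subset\mathbb R^d$ ($d\ge2$) be a $d$-polytope in general position with facets $F_1,\dots,F_k$, and let $H$ be the hyperplane spanned by $F_k$. For $1\le i\le k$ put $F_i'=\pi^{-1}(\pi(F_i))\cap H$ and $Q_i=\mathrm{conv}(F_i\cup F_i')$. Then for every $x\in\mathbb R^d$, $$\mathbf 1_{\Omega(P)}(x)=-\operatorname{sign}(F_k)\sum_{i=1}^{k-1}\operatorname{sign}(F_i)\,\mathbf 1_{\rho^+(\Omega(\pi(F_i)),Q_i)}(x).$$
   Context: $\pi:\mathbb R^k\to\mathbb R^{k-1}$ forgets the last coordinate and $\pi^{(j)}$ forgets the last $j$ coordinates. For a compact $S\subset\mathbb R^k$ and $y\in\pi(S)$, $n(y,S)$, $p(y,S)$ are the points of $S\cap\pi^{-1}(y)$ with smallest and largest last coordinate; $NB(S)=\{n(y,S)\}$, $PB(S)=\{p(y,S)\}$ over $y\in\pi(S)$, and $\Omega(S)=S\setminus NB(S)$. For $y\in\mathbb R^{d-1}$, $\rho^+(y,Q)=(Q\cap\pi^{-1}(y))\setminus\{n(y,Q)\}$ (empty if $y\notin\pi(Q)$), and for $T\subset\mathbb R^{d-1}$, $\rho^+(T,Q)=\bigcup_{y\in T}\rho^+(y,Q)$. A $d$-polytope with vertex set $V$ is in general position if for every $0\le k\le d-1$ and every $(k+1)$-subset $U\subset V$, $\pi^{(d-k)}(\mathrm{conv}(U))$ is a $k$-simplex. A facet $F$ of $P$ is positive, $\operatorname{sign}(F)=+1$, if some relative interior point of $F$ lies in $PB(P)$, and negative,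 $\operatorname{sign}(F)=-1$, if some relative interior point of $F$ lies in $NB(P)$; for $P$ in general position each facet is exactly one of these. $\mathbf 1_A$ is the indicator function of $A$. *)

theory Defs
  imports "HOL-Analysis.Analysis"
begin

text \<open>We work in the ambient space R^d = real^('n::{finite,linorder}) with d = CARD('n),
  where the coordinates are ordered by the linear order of the finite index type 'n.
  The coordinate i is the (rank i + 1)-st coordinate. The space R^k (k \<le> d) is
  identified with the subspace of vectors whose coordinates of rank \<ge> k vanish,
  so forgetting coordinates is modelled by setting them to zero.\<close>

definition rank :: "'n::{finite,linorder} \<Rightarrow> nat" where
  "rank i = card {j. j < i}"

definition coord_ix :: "nat \<Rightarrow> 'n::{finite,linorder}" where
  "coord_ix k = (THE i. rank i = k - 1)"

definition lastc :: "nat \<Rightarrow> real^('n::{finite,linorder}) \<Rightarrow> real" where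
  "lastc k x = x $ coord_ix k"

definition projj :: "nat \<Rightarrow> nat \<Rightarrow> real^('n::{finite,linorder}) \<Rightarrow> real^('n::{finite,linorder})" where
  "projj k j x = (\<chi> i. if rank i < k - j then x $ i else 0)"

definition proj :: "nat \<Rightarrow> real^('n::{finite,linorder}) \<Rightarrow> real^('n::{finite,linorder})" where
  "proj k = projj k 1"

definition nb :: "nat \<Rightarrow> (real^('n::{finite,linorder})) set \<Rightarrow> real^('n::{finite,linorder}) \<Rightarrow> real^('n::{finite,linorder})" where
  "nb k S y = (THE p. p \<in> S \<and> proj k p = y \<and>
      (\<forall>q\<in>S. proj k q = y \<longrightarrow> lastc k p \<le> lastc k q))"

definition pb :: "nat \<Rightarrow> (real^('n::{finite,linorder})) set \<Rightarrow> real^('n::{finite,linorder}) \<Rightarrow> real^('n::{finite,linorder})" where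
  "pb k S y = (THE p. p \<in> S \<and> proj k p = y \<and>
      (\<forall>q\<in>S. proj k q = y \<longrightarrow> lastc k q \<le> lastc k p))"

definition NB :: "nat \<Rightarrow> (real^('n::{finite,linorder})) set \<Rightarrow> (real^('n::{finite,linorder})) set" where
  "NB k S = (\<lambda>y. nb k S y) ` (proj k ` S)"

definition PB :: "nat \<Rightarrow> (real^('n::{finite,linorder})) set \<Rightarrow> (real^('n::{finite,linorder})) set" where
  "PB k S = (\<lambda>y. pb k S y) ` (proj k ` S)"

definition Omega :: "nat \<Rightarrow> (real^('n::{finite,linorder})) set \<Rightarrow> (real^('n::{finite,linorder})) set" where
  "Omega k S = S - NB k S"

definition rho_plus :: "nat \<Rightarrow> real^('n::{finite,linorder}) \<Rightarrow> (real^('n::{finite,linorder})) set \<Rightarrow> (real^('n::{finite,linorder})) set" where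
  "rho_plus k y Q = (if y \<in> proj k ` Q then {x \<in> Q. proj k x = y} - {nb k Q y} else {})"

definition rho_plus_set :: "nat \<Rightarrow> (real^('n::{finite,linorder})) set \<Rightarrow> (real^('n::{finite,linorder})) set \<Rightarrow> (real^('n::{finite,linorder})) set" where
  "rho_plus_set k T Q = (\<Union>y\<in>T. rho_plus k y Q)"

definition general_position :: "(real^('n::{finite,linorder})) set \<Rightarrow> bool" where
  "general_position P \<longleftrightarrow>
     polytope P \<and> aff_dim P = int CARD('n) \<and>
     (\<forall>k < CARD('n). \<forall>U. U \<subseteq> {v. v extreme_point_of P} \<and> card U = k + 1 \<longrightarrow>
        (int k) simplex (projj CARD('n) (CARD('n) - k) ` (convex hull U)))"

definition facet_sign :: "(real^('n::{finite,linorder})) set \<Rightarrow> (real^('n::{finite,linorder})) set \<Rightarrow> real" where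
  "facet_sign P F =
     (if \<exists>x \<in> rel_interior F. x \<in> PB CARD('n) P then 1
      else if \<exists>x \<in> rel_interior F. x \<in> NB CARD('n) P then -1 else 0)"

end

(*
  Fix x and put y = pi(x). The probe points y - s e_(d-1) for small s > 0 lie either all inside
  or all outside the projection of each face (faces are convex), and y is in Omega(pi F)
  exactly when they lie inside pi(F). General position keeps them off the projections of the
  faces of dimension at most d - 2, so they lie in the projection of no facet (and then x is not
  in Omega(P)) or of exactly two: the upper facet F+ through the top and the lower facet F-
  through the bottom of the fibre of P over the probe. Over y, the fibre of P is the segment
  between its points g- on F- and g+ on F+, and the fibre of Q_i is the segment between F_i and
  the point h of H, whose rho+ part is half open. The two surviving prism terms are indicators of
  intervals with common endpoint h and telescope to the indicator of (g-, g+], because H supports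
  P from the side given by sign(F_k). The term of F_k itself vanishes since Q_k lies in H.
*)
theory Submission
  imports Defs
begin

section \<open>Coordinates and fibres\<close>

lemma rank_less_card: "rank (i::'n::{finite,linorder}) < CARD('n)"
proof -
  have "{j. j < i} \<subset> (UNIV::'n set)" by auto
  then show ?thesis unfolding rank_def by (simp add: psubset_card_mono)
qed

lemma strict_mono_rank: "strict_mono (rank :: 'n::{finite,linorder} \<Rightarrow> nat)"
proof (rule strict_monoI)
  fix i j :: 'n assume "i < j"
  then have "{k. k < i} \<subset> {k. k < j}" by auto
  then show "rank i < rank j" unfolding rank_def by (simp add: psubset_card_mono)
qed

lemma rank_eq_iff: "rank (i::'n::{finite,linorder}) = rank j \<longleftrightarrow> i = j"
  using strict_mono_eq[OF strict_mono_rank] .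

lemma range_rank: "range (rank :: 'n::{finite,linorder} \<Rightarrow> nat) = {..<CARD('n)}"
proof -
  have "inj (rank :: 'n \<Rightarrow> nat)" by (simp add: inj_def rank_eq_iff)
  then have "card (range (rank :: 'n \<Rightarrow> nat)) = CARD('n)" by (simp add: card_image)
  moreover have "range (rank :: 'n \<Rightarrow> nat) \<subseteq> {..<CARD('n)}" using rank_less_card by auto
  ultimately show ?thesis by (simp add: card_subset_eq)
qed

lemma rank_coord_ix:
  "1 \<le> k \<Longrightarrow> k \<le> CARD('n) \<Longrightarrow> rank (coord_ix k :: 'n::{finite,linorder}) = k - 1"
proof -
  assume "1 \<le> k" "k \<le> CARD('n)"
  then have "k - 1 \<in> range (rank :: 'n \<Rightarrow> nat)" using range_rank[where 'n='n] by simp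
  then have "\<exists>!i::'n. rank i = k - 1" using rank_eq_iff by (metis imageE)
  then show ?thesis unfolding coord_ix_def by (rule theI')
qed

text \<open>S \<subseteq> R^k, with R^k encoded as the vectors vanishing at all coordinates of rank at least k.\<close>

definition lives_in :: "nat \<Rightarrow> (real^('n::{finite,linorder})) set \<Rightarrow> bool" where
  "lives_in k S \<longleftrightarrow> (\<forall>w\<in>S. \<forall>i. k \<le> rank i \<longrightarrow> w $ i = 0)"

lemma proj_nth: "proj k x $ i = (if rank i < k - 1 then x $ i else 0)"
  by (simp add: proj_def projj_def)

lemma linear_projj: "linear (projj k j)"
  by (rule linearI) (auto simp: vec_eq_iff projj_def)

lemma linear_proj: "linear (proj k)"
  unfolding proj_def by (rule linear_projj)

lemma continuous_on_proj: "continuous_on S (proj k :: real^('n::{finite,linorder}) \<Rightarrow> _)"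
  using linear_proj linear_continuous_on linear_conv_bounded_linear by blast

lemma eq_if_proj_eq_lastc_eq:
  fixes u v :: "real^('n::{finite,linorder})"
  assumes "1 \<le> k" "k \<le> CARD('n)" "lives_in k {u, v}"
    and "proj k u = proj k v" "lastc k u = lastc k v"
  shows "u = v"
proof (subst vec_eq_iff, intro allI)
  fix i :: 'n
  consider "rank i < k - 1" | "rank i = k - 1" | "k \<le> rank i" by linarith
  then show "u $ i = v $ i"
  proof cases
    case 1
    then show ?thesis using assms(4) by (metis proj_nth)
  next
    case 2
    then have "i = coord_ix k" using rank_coord_ix assms(1,2) rank_eq_iff by metis
    then show ?thesis using assms(5) by (simp add: lastc_def)
  next
    case 3
    then show ?thesis using assms(3) by (simp add: lives_in_def)
  qed
qed

lemma nb_eqI: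
  fixes S :: "(real^('n::{finite,linorder})) set"
  assumes "1 \<le> k" "k \<le> CARD('n)" "lives_in k S" "q \<in> S" "proj k q = y"
    and "\<forall>w\<in>S. proj k w = y \<longrightarrow> lastc k q \<le> lastc k w"
  shows "nb k S y = q"
  unfolding nb_def
proof (rule the_equality)
  fix p assume p: "p \<in> S \<and> proj k p = y \<and> (\<forall>w\<in>S. proj k w = y \<longrightarrow> lastc k p \<le> lastc k w)"
  then have "lives_in k {p, q}" using assms(3,4) by (simp add: lives_in_def)
  moreover have "lastc k p = lastc k q" using assms(4-6) p by force
  ultimately show "p = q" using eq_if_proj_eq_lastc_eq[OF assms(1,2)] assms(5) p by blast
qed (use assms in blast)

lemma pb_eqI:
  fixes S :: "(real^('n::{finite,linorder})) set"
  assumes "1 \<le> k" "k \<le> CARD('n)" "lives_in k S" "q \<in> S" "proj k q = y"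
    and "\<forall>w\<in>S. proj k w = y \<longrightarrow> lastc k w \<le> lastc k q"
  shows "pb k S y = q"
  unfolding pb_def
proof (rule the_equality)
  fix p assume p: "p \<in> S \<and> proj k p = y \<and> (\<forall>w\<in>S. proj k w = y \<longrightarrow> lastc k w \<le> lastc k p)"
  then have "lives_in k {p, q}" using assms(3,4) by (simp add: lives_in_def)
  moreover have "lastc k p = lastc k q" using assms(4-6) p by force
  ultimately show "p = q" using eq_if_proj_eq_lastc_eq[OF assms(1,2)] assms(5) p by blast
qed (use assms in blast)

lemma compact_fibre:
  fixes S :: "(real^('n::{finite,linorder})) set"
  assumes "compact S"
  shows "compact (S \<inter> proj k -` {y})"
proof -
  have "closed (proj k -` {y} :: (real,'n) vec set)"
    using continuous_closed_vimage[of "{y}" "proj k"] continuous_on_proj[of UNIV k]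
    by (simp add: continuous_on_eq_continuous_at) blast
  then show ?thesis using assms compact_Int_closed by blast
qed

lemma fibre_has_lowest:
  fixes S :: "(real^('n::{finite,linorder})) set"
  assumes "compact S" "y \<in> proj k ` S"
  obtains q where "q \<in> S" "proj k q = y" "\<forall>w\<in>S. proj k w = y \<longrightarrow> lastc k q \<le> lastc k w"
proof -
  have "continuous_on (S \<inter> proj k -` {y}) (lastc k)"
    unfolding lastc_def by (intro continuous_intros)
  moreover have "S \<inter> proj k -` {y} \<noteq> {}" using assms by auto
  ultimately obtain q where
    "q \<in> S \<inter> proj k -` {y}" "\<forall>w \<in> S \<inter> proj k -` {y}. lastc k q \<le> lastc k w"
    using continuous_attains_inf[OF compact_fibre[OF assms(1)]] by blast
  then show ?thesis using that by auto
qed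

lemma fibre_has_highest:
  fixes S :: "(real^('n::{finite,linorder})) set"
  assumes "compact S" "y \<in> proj k ` S"
  obtains q where "q \<in> S" "proj k q = y" "\<forall>w\<in>S. proj k w = y \<longrightarrow> lastc k w \<le> lastc k q"
proof -
  have "continuous_on (S \<inter> proj k -` {y}) (lastc k)"
    unfolding lastc_def by (intro continuous_intros)
  moreover have "S \<inter> proj k -` {y} \<noteq> {}" using assms by auto
  ultimately obtain q where
    "q \<in> S \<inter> proj k -` {y}" "\<forall>w \<in> S \<inter> proj k -` {y}. lastc k w \<le> lastc k q"
    using continuous_attains_sup[OF compact_fibre[OF assms(1)]] by blast
  then show ?thesis using that by auto
qed

lemma mem_NB_iff:
  fixes S :: "(real^('n::{finite,linorder})) set"
  assumes "1 \<le> k" "k \<le> CARD('n)" "lives_in k S" "compact S" "x \<in> S"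
  shows "x \<in> NB k S \<longleftrightarrow> (\<forall>w\<in>S. proj k w = proj k x \<longrightarrow> lastc k x \<le> lastc k w)"
proof
  assume "x \<in> NB k S"
  then obtain y where y: "y \<in> proj k ` S" "x = nb k S y" unfolding NB_def by auto
  obtain q where q: "q \<in> S" "proj k q = y" "\<forall>w\<in>S. proj k w = y \<longrightarrow> lastc k q \<le> lastc k w"
    using fibre_has_lowest[OF assms(4) y(1)] by blast
  then show "\<forall>w\<in>S. proj k w = proj k x \<longrightarrow> lastc k x \<le> lastc k w"
    using y(2) nb_eqI[OF assms(1-3) q] by simp
next
  assume "\<forall>w\<in>S. proj k w = proj k x \<longrightarrow> lastc k x \<le> lastc k w"
  then have "nb k S (proj k x) = x" using nb_eqI[OF assms(1-3,5)] by simp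
  then show "x \<in> NB k S" unfolding NB_def using assms(5) by (metis image_eqI)
qed

lemma mem_PB_iff:
  fixes S :: "(real^('n::{finite,linorder})) set"
  assumes "1 \<le> k" "k \<le> CARD('n)" "lives_in k S" "compact S" "x \<in> S"
  shows "x \<in> PB k S \<longleftrightarrow> (\<forall>w\<in>S. proj k w = proj k x \<longrightarrow> lastc k w \<le> lastc k x)"
proof
  assume "x \<in> PB k S"
  then obtain y where y: "y \<in> proj k ` S" "x = pb k S y" unfolding PB_def by auto
  obtain q where q: "q \<in> S" "proj k q = y" "\<forall>w\<in>S. proj k w = y \<longrightarrow> lastc k w \<le> lastc k q"
    using fibre_has_highest[OF assms(4) y(1)] by blast
  then show "\<forall>w\<in>S. proj k w = proj k x \<longrightarrow> lastc k w \<le> lastc k x"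
    using y(2) pb_eqI[OF assms(1-3) q] by simp
next
  assume "\<forall>w\<in>S. proj k w = proj k x \<longrightarrow> lastc k w \<le> lastc k x"
  then have "pb k S (proj k x) = x" using pb_eqI[OF assms(1-3,5)] by simp
  then show "x \<in> PB k S" unfolding PB_def using assms(5) by (metis image_eqI)
qed

lemma mem_Omega_iff:
  fixes S :: "(real^('n::{finite,linorder})) set"
  assumes "1 \<le> k" "k \<le> CARD('n)" "lives_in k S" "compact S"
  shows "x \<in> Omega k S \<longleftrightarrow> x \<in> S \<and> (\<exists>w\<in>S. proj k w = proj k x \<and> lastc k w < lastc k x)"
  by (auto simp: Omega_def mem_NB_iff[OF assms] not_le) fastforce

lemma mem_rho_plus_set_iff:
  "x \<in> rho_plus_set k T Q \<longleftrightarrow> proj k x \<in> T \<and> x \<in> Q \<and> x \<noteq> nb k Q (proj k x)"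
  unfolding rho_plus_set_def rho_plus_def by (auto split: if_splits)

lemma rho_plus_set_eq_empty_if_fibres_trivial:
  fixes Q :: "(real^('n::{finite,linorder})) set"
  assumes "1 \<le> k" "k \<le> CARD('n)" "lives_in k Q"
    and "\<And>u v. u \<in> Q \<Longrightarrow> v \<in> Q \<Longrightarrow> proj k u = proj k v \<Longrightarrow> u = v"
  shows "rho_plus_set k T Q = {}"
proof -
  have "nb k Q (proj k x) = x" if "x \<in> Q" for x
    using nb_eqI[OF assms(1-3) that refl] assms(4) that by blast
  then show ?thesis by (auto simp: mem_rho_plus_set_iff)
qed

section \<open>The last two coordinates\<close>

definition last_coord :: "'n::{finite,linorder}" where
  "last_coord = coord_ix CARD('n)"

definition penult_coord :: "'n::{finite,linorder}" where
  "penult_coord = coord_ix (CARD('n) - 1)"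

lemma one_le_card: "1 \<le> CARD('n::finite)"
  by (simp add: Suc_leI)

lemma rank_last_coord: "rank (last_coord :: 'n::{finite,linorder}) = CARD('n) - 1"
  unfolding last_coord_def by (rule rank_coord_ix) (simp_all add: one_le_card)

lemma rank_penult_coord:
  "2 \<le> CARD('n::{finite,linorder}) \<Longrightarrow> rank (penult_coord :: 'n) = CARD('n) - 2"
  unfolding penult_coord_def by (subst rank_coord_ix) auto

lemma last_coord_neq_penult_coord:
  "2 \<le> CARD('n::{finite,linorder}) \<Longrightarrow> (last_coord :: 'n) \<noteq> penult_coord"
proof
  assume "2 \<le> CARD('n)" "(last_coord :: 'n) = penult_coord"
  then show False using rank_last_coord[where 'n='n] rank_penult_coord[where 'n='n] by simp
qed

lemma rank_less_card_minus_1_iff: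
  "rank (i::'n::{finite,linorder}) < CARD('n) - 1 \<longleftrightarrow> i \<noteq> last_coord"
proof -
  have "i = last_coord \<longleftrightarrow> rank i = CARD('n) - 1"
    using rank_last_coord[where 'n='n] rank_eq_iff[of i last_coord] by simp
  then show ?thesis using rank_less_card[of i] by linarith
qed

lemma rank_less_card_minus_2_iff:
  "2 \<le> CARD('n::{finite,linorder}) \<Longrightarrow>
    rank (i::'n) < CARD('n) - 2 \<longleftrightarrow> i \<noteq> last_coord \<and> i \<noteq> penult_coord"
proof -
  assume "2 \<le> CARD('n)"
  moreover have "i = last_coord \<longleftrightarrow> rank i = CARD('n) - 1"
    using rank_last_coord[where 'n='n] rank_eq_iff[of i last_coord] by simp
  moreover have "i = penult_coord \<longleftrightarrow> rank i = CARD('n) - 2"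
    using rank_penult_coord[OF \<open>2 \<le> CARD('n)\<close>] rank_eq_iff[of i penult_coord] by simp
  ultimately show ?thesis using rank_less_card[of i] by linarith
qed

lemma proj_card_nth:
  "proj CARD('n) (x::real^('n::{finite,linorder})) $ i = (if i = last_coord then 0 else x $ i)"
  using rank_less_card_minus_1_iff[of i] by (simp add: proj_nth)

lemma proj_card_minus_1_nth:
  "2 \<le> CARD('n) \<Longrightarrow> proj (CARD('n) - 1) (x::real^('n::{finite,linorder})) $ i =
     (if i = last_coord \<or> i = penult_coord then 0 else x $ i)"
proof -
  assume "2 \<le> CARD('n)"
  moreover have "CARD('n) - 1 - 1 = CARD('n) - 2" by simp
  ultimately show ?thesis by (simp only: proj_nth rank_less_card_minus_2_iff) auto
qed

lemma lastc_card: "lastc CARD('n) (x::real^('n::{finite,linorder})) = x $ last_coord"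
  by (simp add: lastc_def last_coord_def)

lemma lastc_card_minus_1: "lastc (CARD('n) - 1) (x::real^('n::{finite,linorder})) = x $ penult_coord"
  by (simp add: lastc_def penult_coord_def)

lemma lives_in_card: "lives_in CARD('n) (S::(real^('n::{finite,linorder})) set)"
proof -
  have "\<not> CARD('n) \<le> rank i" for i :: 'n using rank_less_card[of i] by simp
  then show ?thesis by (simp add: lives_in_def)
qed

lemma lives_in_proj_image:
  "lives_in (CARD('n) - 1) (proj CARD('n) ` (S::(real^('n::{finite,linorder})) set))"
proof -
  have "i = last_coord" if "CARD('n) - 1 \<le> rank i" for i :: 'n
    using rank_less_card_minus_1_iff[of i] that by simp
  then show ?thesis by (auto simp: lives_in_def proj_card_nth)
qed

lemmas nb_card_eqI = nb_eqI[OF one_le_card order_refl lives_in_card]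
lemmas mem_NB_card_iff = mem_NB_iff[OF one_le_card order_refl lives_in_card]
lemmas mem_PB_card_iff = mem_PB_iff[OF one_le_card order_refl lives_in_card]
lemmas mem_Omega_card_iff = mem_Omega_iff[OF one_le_card order_refl lives_in_card]

lemma diff_eq_vertical_if_proj_eq:
  fixes u v :: "real^('n::{finite,linorder})"
  assumes "proj CARD('n) u = proj CARD('n) v"
  shows "u - v = (u $ last_coord - v $ last_coord) *\<^sub>R axis last_coord 1"
proof -
  have "(u - v) $ i = ((u $ last_coord - v $ last_coord) *\<^sub>R axis last_coord 1) $ i" for i
  proof (cases "i = last_coord")
    case False
    then have "proj CARD('n) u $ i = proj CARD('n) v $ i" using assms by simp
    then show ?thesis using False by (simp add: proj_card_nth axis_def)
  qed simp
  then show ?thesis by (simp only: vec_eq_iff) blast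
qed

lemma inner_diff_if_proj_eq:
  fixes u v a :: "real^('n::{finite,linorder})"
  assumes "proj CARD('n) u = proj CARD('n) v"
  shows "a \<bullet> u - a \<bullet> v = (u $ last_coord - v $ last_coord) * a $ last_coord"
proof -
  have "a \<bullet> u - a \<bullet> v = a \<bullet> (u - v)" by (simp add: inner_diff_right)
  also have "\<dots> = a \<bullet> ((u $ last_coord - v $ last_coord) *\<^sub>R axis last_coord 1)"
    by (simp only: diff_eq_vertical_if_proj_eq[OF assms])
  also have "\<dots> = (u $ last_coord - v $ last_coord) * a $ last_coord"
    by (simp add: inner_axis)
  finally show ?thesis .
qed

lemma eq_if_proj_eq_last_eq:
  fixes u v :: "real^('n::{finite,linorder})"
  assumes "proj CARD('n) u = proj CARD('n) v" "u $ last_coord = v $ last_coord"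
  shows "u = v"
proof -
  have "u - v = 0"
    by (simp only: diff_eq_vertical_if_proj_eq[OF assms(1)] assms(2) diff_self scaleR_zero_left)
  then show ?thesis by simp
qed

lemma proj_add_vertical:
  "proj CARD('n) ((x::real^('n::{finite,linorder})) + c *\<^sub>R axis last_coord 1) = proj CARD('n) x"
  by (auto simp: vec_eq_iff proj_card_nth axis_def)

lemma proj_proj: "proj CARD('n) (proj CARD('n) (x::real^('n::{finite,linorder}))) = proj CARD('n) x"
  by (simp add: vec_eq_iff proj_card_nth)

lemma proj_convex_comb:
  fixes a b :: "real^('n::{finite,linorder})"
  assumes "proj CARD('n) a = y" "proj CARD('n) b = y"
  shows "proj CARD('n) ((1 - u) *\<^sub>R a + u *\<^sub>R b) = y"
proof (subst vec_eq_iff, intro allI)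
  fix i :: 'n
  have "proj CARD('n) a $ i = y $ i" "proj CARD('n) b $ i = y $ i" using assms by simp_all
  then show "proj CARD('n) ((1 - u) *\<^sub>R a + u *\<^sub>R b) $ i = y $ i"
    by (cases "i = last_coord") (auto simp: proj_card_nth algebra_simps)
qed

section \<open>General position\<close>

lemma inj_on_affine_hull_if_independent_image:
  fixes f :: "'a::real_vector \<Rightarrow> 'b::real_vector"
  assumes f: "linear f" and B: "finite B" "inj_on f B" and ind: "\<not> affine_dependent (f ` B)"
  shows "inj_on f (affine hull B)"
proof (rule inj_onI)
  fix w1 w2 assume w: "w1 \<in> affine hull B" "w2 \<in> affine hull B" "f w1 = f w2"
  obtain u1 where u1: "sum u1 B = 1" "(\<Sum>v\<in>B. u1 v *\<^sub>R v) = w1"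
    using w(1) affine_hull_finite[OF B(1)] by blast
  obtain u2 where u2: "sum u2 B = 1" "(\<Sum>v\<in>B. u2 v *\<^sub>R v) = w2"
    using w(2) affine_hull_finite[OF B(1)] by blast
  define U where "U c = u1 (inv_into B f c) - u2 (inv_into B f c)" for c
  have UB: "U (f v) = u1 v - u2 v" if "v \<in> B" for v
    using B(2) that unfolding U_def by simp
  have "sum U (f ` B) = (\<Sum>v\<in>B. U (f v))" by (simp add: sum.reindex[OF B(2)])
  also have "\<dots> = (\<Sum>v\<in>B. u1 v - u2 v)" using UB by simp
  finally have sum0: "sum U (f ` B) = 0" using u1 u2 by (simp add: sum_subtractf)
  have "(\<Sum>c\<in>f ` B. U c *\<^sub>R c) = (\<Sum>v\<in>B. U (f v) *\<^sub>R f v)"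
    by (simp add: sum.reindex[OF B(2)])
  also have "\<dots> = (\<Sum>v\<in>B. u1 v *\<^sub>R f v - u2 v *\<^sub>R f v)"
    using UB by (simp add: scaleR_diff_left)
  also have "\<dots> = f w1 - f w2"
  proof -
    have "f (\<Sum>v\<in>B. u v *\<^sub>R v) = (\<Sum>v\<in>B. u v *\<^sub>R f v)" for u
      using f by (simp add: linear_sum linear_scale o_def)
    then show ?thesis unfolding u1(2)[symmetric] u2(2)[symmetric] by (simp add: sum_subtractf)
  qed
  finally have comb0: "(\<Sum>c\<in>f ` B. U c *\<^sub>R c) = 0" using w(3) by simp
  have "U c = 0" if "c \<in> f ` B" for c
    using ind sum0 comb0 that
    unfolding affine_dependent_explicit_finite[OF finite_imageI[OF B(1)]] by blast
  then have "\<forall>v\<in>B. u1 v = u2 v" using UB by fastforce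
  then show "w1 = w2" using u1 u2 by (metis (no_types, lifting) sum.cong)
qed

lemma projj_eq_iff:
  "projj CARD('n) (CARD('n) - m) (u::real^('n::{finite,linorder})) = projj CARD('n) (CARD('n) - m) v
    \<longleftrightarrow> (\<forall>i. rank i < m \<longrightarrow> u $ i = v $ i)" if "m \<le> CARD('n)"
  using that by (auto simp: vec_eq_iff projj_def)

text \<open>An affine basis of the face made of extreme points of P is mapped onto an m-simplex,
  so its image stays affinely independent.\<close>
lemma general_position_inj_on_face:
  fixes P :: "(real^('n::{finite,linorder})) set"
  assumes gp: "general_position P" and R: "R face_of P" and m: "aff_dim R = int m" "m < CARD('n)"
  shows "inj_on (projj CARD('n) (CARD('n) - m)) R"
proof -
  define f :: "(real,'n) vec \<Rightarrow> (real,'n) vec" where "f = projj CARD('n) (CARD('n) - m)"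
  have "polytope P" using gp unfolding general_position_def by simp
  then have "polytope R" using face_of_polytope_polytope[OF _ R] by blast
  then obtain V where V: "finite V" "R = convex hull V" unfolding polytope_def by blast
  define E where "E = {v. v extreme_point_of R}"
  have RE: "R = convex hull E" using Krein_Milman_polytope[OF V(1)] V(2) E_def by simp
  have finE: "finite E"
    unfolding E_def using finite_polyhedron_extreme_points polytope_imp_polyhedron \<open>polytope R\<close> by blast
  obtain B where B: "B \<subseteq> E" "affine hull B = affine hull E" "\<not> affine_dependent B"
      "of_nat (card B) = aff_dim E + 1"
    using aff_dim_inner_basis_exists by blast
  have finB: "finite B" using B(1) finE finite_subset by blast
  have "aff_dim E = aff_dim R" using RE aff_dim_convex_hull by metis
  then have cardB: "card B = m + 1" using B(4) m(1) by linarith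
  have "B \<subseteq> {v. v extreme_point_of P}" using B(1) extreme_point_of_face[OF R] E_def by blast
  moreover have "\<forall>k < CARD('n). \<forall>U. U \<subseteq> {v. v extreme_point_of P} \<and> card U = k + 1 \<longrightarrow>
      (int k) simplex (projj CARD('n) (CARD('n) - k) ` (convex hull U))"
    using gp unfolding general_position_def by (elim conjE)
  ultimately have "int m simplex (f ` (convex hull B))"
    unfolding f_def using m(2) cardB by simp
  then have "aff_dim (convex hull (f ` B)) = int m"
    using aff_dim_simplex by (simp add: convex_hull_linear_image[OF linear_projj] f_def)
  then have "aff_dim (f ` B) = int m" by (simp add: aff_dim_convex_hull)
  moreover have "card (f ` B) \<le> card B" by (rule card_image_le[OF finB])
  moreover have "aff_dim (f ` B) \<le> int (card (f ` B)) - 1" using aff_dim_le_card finB by blast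
  ultimately have cfB: "card (f ` B) = card B" using cardB by linarith
  have "inj_on f (affine hull B)"
  proof (rule inj_on_affine_hull_if_independent_image[OF _ finB])
    show "linear f" unfolding f_def by (rule linear_projj)
    show "inj_on f B" using eq_card_imp_inj_on[OF finB cfB] .
    show "\<not> affine_dependent (f ` B)"
      by (simp add: affine_independent_iff_card finB \<open>aff_dim (f ` B) = int m\<close> cfB cardB)
  qed
  moreover have "R \<subseteq> affine hull B" using RE B(2) convex_hull_subset_affine_hull by blast
  ultimately show ?thesis unfolding f_def by (rule inj_on_subset)
qed

section \<open>Non-vertical facets\<close>

definition facet_hyperplane ::
    "(real^('n::{finite,linorder})) set \<Rightarrow> (real,'n) vec set \<Rightarrow> (real,'n) vec \<Rightarrow> real \<Rightarrow> bool" where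
  "facet_hyperplane P F a b \<longleftrightarrow> a $ last_coord \<noteq> 0 \<and> P \<subseteq> {x. a \<bullet> x \<le> b} \<and>
     F = P \<inter> {x. a \<bullet> x = b} \<and> affine hull F = {x. a \<bullet> x = b}"

definition upper_facet :: "(real^('n::{finite,linorder})) set \<Rightarrow> (real,'n) vec set \<Rightarrow> bool" where
  "upper_facet P F \<longleftrightarrow>
     (\<forall>w\<in>P. \<forall>f\<in>F. proj CARD('n) w = proj CARD('n) f \<longrightarrow> w $ last_coord \<le> f $ last_coord)"

definition lower_facet :: "(real^('n::{finite,linorder})) set \<Rightarrow> (real,'n) vec set \<Rightarrow> bool" where
  "lower_facet P F \<longleftrightarrow>
     (\<forall>w\<in>P. \<forall>f\<in>F. proj CARD('n) w = proj CARD('n) f \<longrightarrow> f $ last_coord \<le> w $ last_coord)"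

lemma facet_hyperplane_height_le:
  fixes w h :: "real^('n::{finite,linorder})"
  assumes "facet_hyperplane P F a b" "w \<in> P" "h \<in> affine hull F"
    and "proj CARD('n) w = proj CARD('n) h"
  shows "(w $ last_coord - h $ last_coord) * a $ last_coord \<le> 0"
proof -
  have "a \<bullet> w \<le> b" "a \<bullet> h = b" using assms(1-3) unfolding facet_hyperplane_def by auto
  then show ?thesis using inner_diff_if_proj_eq[OF assms(4), of a] by simp
qed

lemma facet_hyperplane_point_over:
  fixes x :: "real^('n::{finite,linorder})"
  assumes "facet_hyperplane P F a b"
  obtains h where "h \<in> affine hull F" "proj CARD('n) h = proj CARD('n) x"
proof
  let ?y = "proj CARD('n) x"
  have a0: "a $ last_coord \<noteq> 0" and aff: "affine hull F = {w. a \<bullet> w = b}"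
    using assms unfolding facet_hyperplane_def by auto
  show "?y + ((b - a \<bullet> ?y) / a $ last_coord) *\<^sub>R axis last_coord 1 \<in> affine hull F"
    unfolding aff using a0 by (simp add: inner_add_right inner_axis)
  show "proj CARD('n) (?y + ((b - a \<bullet> ?y) / a $ last_coord) *\<^sub>R axis last_coord 1) = ?y"
    by (simp add: proj_add_vertical proj_proj)
qed

lemma facet_hyperplane_inj_on_affine_hull:
  fixes g h :: "real^('n::{finite,linorder})"
  assumes "facet_hyperplane P F a b" "g \<in> affine hull F" "h \<in> affine hull F"
    and "proj CARD('n) g = proj CARD('n) h"
  shows "g = h"
proof -
  have "a \<bullet> g = b" "a \<bullet> h = b" "a $ last_coord \<noteq> 0"
    using assms(1-3) unfolding facet_hyperplane_def by auto
  then have "g $ last_coord = h $ last_coord" using inner_diff_if_proj_eq[OF assms(4), of a] by simp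
  then show ?thesis using eq_if_proj_eq_last_eq[OF assms(4)] by simp
qed

section \<open>Probing below a point of the base\<close>

definition probe :: "real^('n::{finite,linorder}) \<Rightarrow> real \<Rightarrow> (real,'n) vec" where
  "probe y s = y - s *\<^sub>R axis penult_coord 1"

definition probe_settled :: "(real^('n::{finite,linorder})) set \<Rightarrow> (real,'n) vec \<Rightarrow> real \<Rightarrow> bool" where
  "probe_settled C y \<epsilon> \<longleftrightarrow>
     (\<forall>s. 0 < s \<and> s < \<epsilon> \<longrightarrow> probe y s \<in> C) \<or> (\<forall>s. 0 < s \<and> s < \<epsilon> \<longrightarrow> probe y s \<notin> C)"

lemma probe_nth: "probe y s $ i = (if i = penult_coord then y $ i - s else y $ i)"
  by (simp add: probe_def axis_def)

lemma probe_0 [simp]: "probe y 0 = y"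
  by (simp add: probe_def)

lemma probe_between:
  assumes C: "convex C" and ab: "probe y a \<in> C" "probe y b \<in> C" and s: "a \<le> s" "s \<le> b"
  shows "probe y s \<in> C"
proof (cases "a = b")
  case False
  define u where "u = (s - a) / (b - a)"
  have u: "0 \<le> u" "u \<le> 1" unfolding u_def using s False by (auto simp: divide_simps)
  have "(1 - u) *\<^sub>R probe y a + u *\<^sub>R probe y b = probe y ((1 - u) * a + u * b)"
    by (simp add: probe_def algebra_simps)
  also have "(1 - u) * a + u * b = a + u * (b - a)" by algebra
  also have "\<dots> = s" unfolding u_def using False by simp
  finally show ?thesis using convexD[OF C ab, of "1 - u" u] u by simp
qed (use ab s in simp)

lemma probe_settled_mono: "probe_settled C y \<epsilon> \<Longrightarrow> \<epsilon>' \<le> \<epsilon> \<Longrightarrow> probe_settled C y \<epsilon>'"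
  unfolding probe_settled_def by force

text \<open>A convex set meets a line in an interval.\<close>
lemma convex_probe_settled:
  assumes C: "convex C"
  obtains \<epsilon> where "\<epsilon> > 0" "probe_settled C y \<epsilon>"
proof (cases "\<exists>\<epsilon>>0. \<forall>s. 0 < s \<and> s < \<epsilon> \<longrightarrow> probe y s \<notin> C")
  case True
  then show ?thesis using that probe_settled_def by blast
next
  case False
  then have small: "\<forall>\<epsilon>>0. \<exists>s. 0 < s \<and> s < \<epsilon> \<and> probe y s \<in> C" by blast
  then obtain s1 where s1: "0 < s1" "probe y s1 \<in> C" by (meson zero_less_one)
  have "probe y s \<in> C" if s: "0 < s" "s < s1" for s
  proof -
    obtain s' where "0 < s'" "s' < s" "probe y s' \<in> C" using small s(1) by blast
    then show ?thesis using probe_between[OF C _ s1(2)] s by simp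
  qed
  then show ?thesis using that s1(1) probe_settled_def by blast
qed

lemma closed_probe_limit:
  assumes "closed C" "\<epsilon> > 0" "\<forall>s. 0 < s \<and> s < \<epsilon> \<longrightarrow> probe y s \<in> C"
  shows "y \<in> C"
proof (rule Lim_in_closed_set[OF assms(1) _ trivial_limit_at_right_real])
  show "\<forall>\<^sub>F s in at_right 0. probe y s \<in> C"
    unfolding eventually_at_right_field using assms(2,3) by blast
  have "((\<lambda>s. y - s *\<^sub>R axis penult_coord 1) \<longlongrightarrow> y - 0 *\<^sub>R axis penult_coord 1) (at_right 0)"
    by (intro tendsto_intros)
  then show "(probe y \<longlongrightarrow> y) (at_right 0)" by (simp add: probe_def[abs_def])
qed

lemma proj_card_minus_1_probe:
  "2 \<le> CARD('n) \<Longrightarrow>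
    proj (CARD('n) - 1) (probe (y::real^('n::{finite,linorder})) s) = proj (CARD('n) - 1) y"
  unfolding vec_eq_iff proj_card_minus_1_nth by (simp add: probe_nth)

lemma eq_probe_if_proj_card_minus_1_eq:
  fixes w y :: "real^('n::{finite,linorder})"
  assumes card: "2 \<le> CARD('n)" and last: "w $ last_coord = 0" "y $ last_coord = 0"
    and base: "proj (CARD('n) - 1) w = proj (CARD('n) - 1) y"
  shows "w = probe y (y $ penult_coord - w $ penult_coord)"
proof (subst vec_eq_iff, intro allI)
  fix i :: 'n
  have "proj (CARD('n) - 1) w $ i = proj (CARD('n) - 1) y $ i" using base by (rule arg_cong)
  then have "i \<noteq> last_coord \<Longrightarrow> i \<noteq> penult_coord \<Longrightarrow> w $ i = y $ i"
    unfolding proj_card_minus_1_nth[OF card] by simp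
  then show "w $ i = probe y (y $ penult_coord - w $ penult_coord) $ i"
    using last last_coord_neq_penult_coord[OF card]
    by (cases "i = last_coord"; cases "i = penult_coord") (auto simp: probe_nth)
qed

lemma mem_Omega_proj_iff:
  fixes S :: "(real^('n::{finite,linorder})) set"
  assumes card: "2 \<le> CARD('n)" and S: "compact S"
  shows "y \<in> Omega (CARD('n) - 1) (proj CARD('n) ` S) \<longleftrightarrow>
    y \<in> proj CARD('n) ` S \<and> (\<exists>s>0. probe y s \<in> proj CARD('n) ` S)"
proof -
  have "1 \<le> CARD('n) - 1" "CARD('n) - 1 \<le> CARD('n)" using card by auto
  moreover have "compact (proj CARD('n) ` S)" using compact_continuous_image[OF continuous_on_proj S] .
  ultimately have Omega: "y \<in> Omega (CARD('n) - 1) (proj CARD('n) ` S) \<longleftrightarrow> y \<in> proj CARD('n) ` S \<and>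
      (\<exists>w\<in>proj CARD('n) ` S. proj (CARD('n) - 1) w = proj (CARD('n) - 1) y \<and>
          w $ penult_coord < y $ penult_coord)"
    using mem_Omega_iff[OF _ _ lives_in_proj_image] unfolding lastc_card_minus_1 by blast
  have last_0: "z $ last_coord = 0" if "z \<in> proj CARD('n) ` S" for z
    using that by (auto simp: proj_card_nth)
  show ?thesis
  proof
    assume "y \<in> Omega (CARD('n) - 1) (proj CARD('n) ` S)"
    then obtain w where "y \<in> proj CARD('n) ` S" "w \<in> proj CARD('n) ` S"
      "proj (CARD('n) - 1) w = proj (CARD('n) - 1) y" "w $ penult_coord < y $ penult_coord"
      unfolding Omega by blast
    then show "y \<in> proj CARD('n) ` S \<and> (\<exists>s>0. probe y s \<in> proj CARD('n) ` S)"
      using eq_probe_if_proj_card_minus_1_eq[OF card] last_0 by (metis diff_gt_0_iff_gt)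
  next
    assume "y \<in> proj CARD('n) ` S \<and> (\<exists>s>0. probe y s \<in> proj CARD('n) ` S)"
    then obtain s where "y \<in> proj CARD('n) ` S" "s > 0" "probe y s \<in> proj CARD('n) ` S" by blast
    moreover have "probe y s $ penult_coord < y $ penult_coord" using \<open>s > 0\<close> by (simp add: probe_nth)
    ultimately show "y \<in> Omega (CARD('n) - 1) (proj CARD('n) ` S)"
      unfolding Omega using proj_card_minus_1_probe[OF card] by blast
  qed
qed

lemma proj_diff_penult_axis:
  "2 \<le> CARD('n) \<Longrightarrow> proj CARD('n) ((x::real^('n::{finite,linorder})) - s *\<^sub>R axis penult_coord 1) =
     probe (proj CARD('n) x) s"
  using last_coord_neq_penult_coord[where 'n='n]
  by (auto simp: vec_eq_iff proj_card_nth probe_nth axis_def)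

section \<open>Vertical segments\<close>

definition prism :: "(real^('n::{finite,linorder})) set \<Rightarrow> (real,'n) vec set \<Rightarrow> (real,'n) vec set" where
  "prism H F = convex hull (F \<union> (proj CARD('n) -` (proj CARD('n) ` F) \<inter> H))"

lemma convex_vertical_fibre_iff:
  fixes Q :: "(real^('n::{finite,linorder})) set"
  assumes Q: "convex Q" and pq: "p \<in> Q" "q \<in> Q" "proj CARD('n) p = y" "proj CARD('n) q = y"
    and fibre: "\<forall>w\<in>Q. proj CARD('n) w = y \<longrightarrow> p $ last_coord \<le> w $ last_coord \<and> w $ last_coord \<le> q $ last_coord"
    and x: "proj CARD('n) x = y"
  shows "x \<in> Q \<longleftrightarrow> p $ last_coord \<le> x $ last_coord \<and> x $ last_coord \<le> q $ last_coord"
proof -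
  have "x \<in> Q" if "p $ last_coord \<le> x $ last_coord" "x $ last_coord \<le> q $ last_coord"
  proof (cases "p $ last_coord = q $ last_coord")
    case True
    then have "x = p" using that eq_if_proj_eq_last_eq[of x p] x pq(3) by simp
    then show ?thesis using pq(1) by simp
  next
    case False
    define u where "u = (x $ last_coord - p $ last_coord) / (q $ last_coord - p $ last_coord)"
    have u: "0 \<le> u" "u \<le> 1" unfolding u_def using that by (auto simp: divide_simps)
    have "(1 - u) *\<^sub>R p + u *\<^sub>R q = x"
    proof (rule eq_if_proj_eq_last_eq)
      show "proj CARD('n) ((1 - u) *\<^sub>R p + u *\<^sub>R q) = proj CARD('n) x"
        using proj_convex_comb[OF pq(3,4)] x by simp
      have "(1 - u) * p $ last_coord + u * q $ last_coord =
          p $ last_coord + u * (q $ last_coord - p $ last_coord)" by algebra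
      also have "\<dots> = x $ last_coord" unfolding u_def using False by simp
      finally show "((1 - u) *\<^sub>R p + u *\<^sub>R q) $ last_coord = x $ last_coord" by simp
    qed
    then show ?thesis using convexD[OF Q pq(1,2), of "1 - u" u] u by simp
  qed
  then show ?thesis using fibre x by blast
qed

lemma rho_plus_vertical_segment:
  fixes Q :: "(real^('n::{finite,linorder})) set"
  assumes Q: "convex Q" and pq: "p \<in> Q" "q \<in> Q" "proj CARD('n) p = y" "proj CARD('n) q = y"
    and fibre: "\<forall>w\<in>Q. proj CARD('n) w = y \<longrightarrow> p $ last_coord \<le> w $ last_coord \<and> w $ last_coord \<le> q $ last_coord"
    and x: "proj CARD('n) x = y"
  shows "x \<in> Q \<and> x \<noteq> nb CARD('n) Q y \<longleftrightarrow> p $ last_coord < x $ last_coord \<and> x $ last_coord \<le> q $ last_coord"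
proof -
  have nb: "nb CARD('n) Q y = p" using nb_card_eqI[OF pq(1,3)] fibre by (simp add: lastc_card)
  have "x = p \<longleftrightarrow> x $ last_coord = p $ last_coord"
    using eq_if_proj_eq_last_eq[of x p] x pq(3) by auto
  then show ?thesis unfolding nb convex_vertical_fibre_iff[OF assms] by auto
qed

lemma signed_interval_telescope:
  fixes gm gp h t a :: real
  assumes "gm \<le> gp" "a \<noteq> 0" "(gp - h) * a \<le> 0" "(gm - h) * a \<le> 0"
  shows "indicator {gm<..gp} t =
    - sgn a * (indicator {min gp h<..max gp h} t - indicator {min gm h<..max gm h} t)"
proof (cases "a > 0")
  case True
  then have "gp \<le> h" "gm \<le> h" using assms(3,4) by (simp_all add: mult_le_0_iff)
  then show ?thesis using assms(1) True by (auto simp: indicator_def)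
next
  case False
  then have "a < 0" "h \<le> gp" "h \<le> gm" using assms(2-4) by (simp_all add: mult_le_0_iff)
  then show ?thesis using assms(1) by (auto simp: indicator_def)
qed

section \<open>Polytopes in general position\<close>

locale general_position_polytope =
  fixes P :: "(real^('n::{finite,linorder})) set"
  assumes two_le_card: "2 \<le> CARD('n)" and P_general_position: "general_position P"
begin

lemma P_polytope: "polytope P"
  using P_general_position general_position_def by blast

lemma P_compact: "compact P"
  using P_polytope polytope_imp_compact by blast

lemma P_convex: "convex P"
  using P_polytope polytope_imp_convex by blast

lemma P_polyhedron: "polyhedron P"
  using P_polytope polytope_imp_polyhedron by blast

lemma aff_dim_P: "aff_dim P = int CARD('n)"
  using P_general_position general_position_def by blast

lemma rel_interior_P: "rel_interior P = interior P"
proof -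
  have "affine hull P = UNIV" using aff_dim_P aff_dim_eq_full[of P] by simp
  then show ?thesis by (rule rel_interior_interior)
qed

lemma compact_face: "F face_of P \<Longrightarrow> compact F"
  using face_of_polytope_polytope[OF P_polytope] polytope_imp_compact by blast

lemma facet_aff_dim: "F facet_of P \<Longrightarrow> aff_dim F = int CARD('n) - 1"
  using aff_dim_P unfolding facet_of_def by simp

lemma facet_rel_interior_nonempty:
  assumes "F facet_of P"
  obtains x where "x \<in> rel_interior F"
proof -
  have "F \<noteq> {}" "convex F" using assms face_of_imp_convex facet_of_def by blast+
  then show ?thesis using that rel_interior_eq_empty by blast
qed

lemma facet_has_hyperplane:
  assumes F: "F facet_of P"
  obtains a b where "facet_hyperplane P F a b"
proof -
  obtain a b where ab: "a \<noteq> 0" "P \<subseteq> {x. a \<bullet> x \<le> b}" "F = P \<inter> {x. a \<bullet> x = b}"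
    using facet_of_polyhedron[OF P_polyhedron F] by blast
  have sub: "F \<subseteq> {x. a \<bullet> x = b}" using ab(3) by blast
  have "aff_dim F = aff_dim {x. a \<bullet> x = b}" using ab(1) facet_aff_dim[OF F] by simp
  then have aff: "affine hull F = {x. a \<bullet> x = b}"
    using aff_dim_eq_full_gen[OF sub] affine_hyperplane by (metis affine_hull_eq)
  have "a $ last_coord \<noteq> 0"
  proof
    assume a0: "a $ last_coord = 0"
    obtain x where x: "x \<in> rel_interior F" using facet_rel_interior_nonempty[OF F] .
    then obtain e where e: "e > 0" "ball x e \<inter> affine hull F \<subseteq> F" and xF: "x \<in> F"
      using mem_rel_interior_ball by blast
    define x' where "x' = x + (e/2) *\<^sub>R axis last_coord 1"
    have "a \<bullet> x' = a \<bullet> x" unfolding x'_def using a0 by (simp add: inner_add_right inner_axis)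
    then have "x' \<in> affine hull F" using aff xF sub by auto
    moreover have "x' \<in> ball x e" unfolding x'_def using e(1) by (simp add: dist_norm)
    ultimately have x'F: "x' \<in> F" using e(2) by blast
    have "CARD('n) - (CARD('n) - 1) = 1" using one_le_card[where 'n='n] by simp
    moreover have "projj CARD('n) 1 x = projj CARD('n) 1 x'"
      unfolding x'_def projj_def
      by (simp add: vec_eq_iff axis_def rank_last_coord)
    moreover have "inj_on (projj CARD('n) (CARD('n) - (CARD('n) - 1))) F"
    proof (rule general_position_inj_on_face[OF P_general_position facet_of_imp_face_of[OF F]])
      show "aff_dim F = int (CARD('n) - 1)"
        using facet_aff_dim[OF F] one_le_card[where 'n='n] by (simp add: of_nat_diff)
    qed simp
    ultimately have "x' $ last_coord = x $ last_coord" using inj_onD xF x'F by metis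
    then show False unfolding x'_def using e(1) by simp
  qed
  then show ?thesis using that ab aff unfolding facet_hyperplane_def by blast
qed

lemma facet_hyperplane_strict_point:
  assumes "facet_hyperplane P F a b"
  obtains c where "c \<in> P" "a \<bullet> c < b"
proof (rule ccontr)
  assume "\<not> thesis"
  then have "P \<subseteq> {x. a \<bullet> x = b}" using assms that unfolding facet_hyperplane_def by force
  then have "aff_dim P \<le> aff_dim {x. a \<bullet> x = b}" by (rule aff_dim_subset)
  moreover have "a \<noteq> 0" using assms unfolding facet_hyperplane_def by auto
  ultimately show False using aff_dim_P by simp
qed

text \<open>Average a point p of the segment from x towards a point c strictly inside the supporting
  halfspace with the reflection of p through x, pushed vertically back onto the hyperplane:
  for small steps the latter point stays in F.\<close>
lemma facet_vertical_step_inside: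
  assumes r: "facet_hyperplane P F a b" and x: "x \<in> rel_interior F"
  obtains \<mu> where "\<mu> * a $ last_coord < 0" "x + \<mu> *\<^sub>R axis last_coord 1 \<in> P"
proof -
  have a0: "a $ last_coord \<noteq> 0" and Fe: "F = P \<inter> {x. a \<bullet> x = b}"
    and aff: "affine hull F = {x. a \<bullet> x = b}" using r unfolding facet_hyperplane_def by auto
  obtain c where c: "c \<in> P" "a \<bullet> c < b" using facet_hyperplane_strict_point[OF r] .
  obtain e where e: "e > 0" "ball x e \<inter> affine hull F \<subseteq> F" and xF: "x \<in> F"
    using x mem_rel_interior_ball by blast
  have xP: "x \<in> P" and ax: "a \<bullet> x = b" using xF Fe by auto
  define K where "K = norm (c - x) + \<bar>a \<bullet> c - b\<bar> / \<bar>a $ last_coord\<bar> + 1"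
  have K0: "K > 0" unfolding K_def by (simp add: add_nonneg_pos)
  define t where "t = min (1/2) (e / (2 * K))"
  have t0: "t > 0" "t \<le> 1/2" "t \<le> e / (2 * K)" unfolding t_def using e(1) K0 by auto
  define \<delta> where "\<delta> = t * (a \<bullet> c - b) / a $ last_coord"
  define p where "p = x + t *\<^sub>R (c - x)"
  define q where "q = x - t *\<^sub>R (c - x) + \<delta> *\<^sub>R axis last_coord 1"
  have pP: "p \<in> P"
  proof -
    have "(1 - t) *\<^sub>R x + t *\<^sub>R c \<in> P" using convexD[OF P_convex xP c(1)] t0 by simp
    then show ?thesis unfolding p_def by (simp add: algebra_simps)
  qed
  have aq: "a \<bullet> q = b"
    unfolding q_def \<delta>_def using a0 ax by (simp add: inner_add_right inner_diff_right inner_axis field_simps)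
  have "norm (q - x) \<le> \<bar>\<delta>\<bar> + t * norm (c - x)"
  proof -
    have "norm (q - x) = norm (\<delta> *\<^sub>R axis last_coord 1 - t *\<^sub>R (c - x))"
      unfolding q_def by (simp add: algebra_simps)
    also have "\<dots> \<le> norm (\<delta> *\<^sub>R (axis last_coord 1 :: (real,'n) vec)) + norm (t *\<^sub>R (c - x))"
      by (rule norm_triangle_ineq4)
    finally show ?thesis using t0 by simp
  qed
  also have "\<bar>\<delta>\<bar> = t * (\<bar>a \<bullet> c - b\<bar> / \<bar>a $ last_coord\<bar>)"
    unfolding \<delta>_def using t0 by (simp add: abs_mult abs_divide)
  finally have "norm (q - x) \<le> t * (K - 1)" unfolding K_def by (simp add: algebra_simps)
  also have "\<dots> < e" using t0 K0 e(1) by (simp add: le_divide_eq algebra_simps)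
  finally have "q \<in> F" using e(2) aq aff by (auto simp: dist_norm norm_minus_commute)
  then have "(1/2) *\<^sub>R p + (1/2) *\<^sub>R q \<in> P" using convexD[OF P_convex pP] Fe by auto
  moreover have "(1/2) *\<^sub>R p + (1/2) *\<^sub>R q = x + (\<delta>/2) *\<^sub>R axis last_coord 1"
    unfolding p_def q_def by (simp add: vec_eq_iff field_simps)
  moreover have "(\<delta>/2) * a $ last_coord < 0" unfolding \<delta>_def using a0 t0 c(2) by (simp add: mult_pos_neg)
  ultimately show ?thesis using that by metis
qed

lemma upper_facet_iff:
  assumes r: "facet_hyperplane P F a b" and F: "F facet_of P"
  shows "upper_facet P F \<longleftrightarrow> a $ last_coord > 0"
proof
  assume up: "upper_facet P F"
  obtain x where x: "x \<in> rel_interior F" using facet_rel_interior_nonempty[OF F] .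
  obtain \<mu> where \<mu>: "\<mu> * a $ last_coord < 0" "x + \<mu> *\<^sub>R axis last_coord 1 \<in> P"
    using facet_vertical_step_inside[OF r x] .
  have "x \<in> F" using x rel_interior_subset by blast
  then have "\<mu> \<le> 0" using up \<mu>(2) proj_add_vertical[of x \<mu>] unfolding upper_facet_def by force
  then show "a $ last_coord > 0" using \<mu>(1) by (simp add: mult_less_0_iff)
next
  assume "a $ last_coord > 0"
  then show "upper_facet P F"
    using facet_hyperplane_height_le[OF r] hull_subset[of F affine]
    unfolding upper_facet_def by (force simp: mult_le_0_iff)
qed

lemma lower_facet_iff:
  assumes r: "facet_hyperplane P F a b" and F: "F facet_of P"
  shows "lower_facet P F \<longleftrightarrow> a $ last_coord < 0"
proof
  assume low: "lower_facet P F"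
  obtain x where x: "x \<in> rel_interior F" using facet_rel_interior_nonempty[OF F] .
  obtain \<mu> where \<mu>: "\<mu> * a $ last_coord < 0" "x + \<mu> *\<^sub>R axis last_coord 1 \<in> P"
    using facet_vertical_step_inside[OF r x] .
  have "x \<in> F" using x rel_interior_subset by blast
  then have "\<mu> \<ge> 0" using low \<mu>(2) proj_add_vertical[of x \<mu>] unfolding lower_facet_def by force
  then show "a $ last_coord < 0" using \<mu>(1) by (simp add: mult_less_0_iff)
next
  assume "a $ last_coord < 0"
  then show "lower_facet P F"
    using facet_hyperplane_height_le[OF r] hull_subset[of F affine]
    unfolding lower_facet_def by (force simp: mult_le_0_iff)
qed

lemma facet_sign_eq_sgn:
  assumes r: "facet_hyperplane P F a b" and F: "F facet_of P"
  shows "facet_sign P F = sgn (a $ last_coord)"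
proof -
  obtain x where x: "x \<in> rel_interior F" using facet_rel_interior_nonempty[OF F] .
  have xF: "x \<in> F" using x rel_interior_subset by blast
  have xP: "x \<in> P" using xF facet_of_imp_subset[OF F] by blast
  have a0: "a $ last_coord \<noteq> 0" using r facet_hyperplane_def by blast
  show ?thesis
  proof (cases "a $ last_coord > 0")
    case True
    then have "x \<in> PB CARD('n) P"
      using upper_facet_iff[OF r F] xF mem_PB_card_iff[OF P_compact xP]
      unfolding upper_facet_def by (simp add: lastc_card)
    then show ?thesis using True x unfolding facet_sign_def by auto
  next
    case False
    then have neg: "a $ last_coord < 0" using a0 by simp
    have "z \<notin> PB CARD('n) P" if z: "z \<in> rel_interior F" for z
    proof
      assume "z \<in> PB CARD('n) P"
      have zF: "z \<in> F" using z rel_interior_subset by blast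
      then have zP: "z \<in> P" using facet_of_imp_subset[OF F] by blast
      obtain \<mu> where \<mu>: "\<mu> * a $ last_coord < 0" "z + \<mu> *\<^sub>R axis last_coord 1 \<in> P"
        using facet_vertical_step_inside[OF r z] .
      have "\<forall>w\<in>P. proj CARD('n) w = proj CARD('n) z \<longrightarrow> w $ last_coord \<le> z $ last_coord"
        using \<open>z \<in> PB CARD('n) P\<close> mem_PB_card_iff[OF P_compact zP] by (simp add: lastc_card)
      then have "(z + \<mu> *\<^sub>R axis last_coord 1) $ last_coord \<le> z $ last_coord"
        using \<mu>(2) proj_add_vertical[of z \<mu>] by blast
      then show False using \<mu>(1) neg by (simp add: mult_less_0_iff)
    qed
    moreover have "x \<in> NB CARD('n) P"
      using lower_facet_iff[OF r F] neg xF mem_NB_card_iff[OF P_compact xP]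
      unfolding lower_facet_def by (simp add: lastc_card)
    ultimately show ?thesis using neg x unfolding facet_sign_def by auto
  qed
qed

definition probe_generic :: "(real,'n) vec \<Rightarrow> real \<Rightarrow> bool" where
  "probe_generic y \<epsilon> \<longleftrightarrow> \<epsilon> > 0 \<and> (\<forall>F. F face_of P \<longrightarrow> probe_settled (proj CARD('n) ` F) y \<epsilon>)"

lemma probe_generic_exists:
  obtains \<epsilon> where "probe_generic y \<epsilon>"
proof -
  let ?settled = "\<lambda>\<epsilon> F. probe_settled (proj CARD('n) ` F) y \<epsilon>"
  have "\<forall>F\<in>{F. F face_of P}. \<forall>\<^sub>F \<epsilon> in at_right 0. ?settled \<epsilon> F"
  proof
    fix F assume "F \<in> {F. F face_of P}"
    then have "convex (proj CARD('n) ` F)"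
      using convex_linear_image linear_proj face_of_imp_convex by blast
    then obtain \<epsilon>0 where "\<epsilon>0 > 0" "?settled \<epsilon>0 F" by (rule convex_probe_settled)
    then show "\<forall>\<^sub>F \<epsilon> in at_right 0. ?settled \<epsilon> F"
      unfolding eventually_at_right_field using probe_settled_mono less_imp_le by metis
  qed
  then have "\<forall>\<^sub>F \<epsilon> in at_right 0. \<forall>F\<in>{F. F face_of P}. ?settled \<epsilon> F"
    by (rule eventually_ball_finite[OF finite_polytope_faces[OF P_polytope]])
  then have "\<forall>\<^sub>F \<epsilon> in at_right 0. 0 < \<epsilon> \<and> (\<forall>F\<in>{F. F face_of P}. ?settled \<epsilon> F)"
    using eventually_at_right_less by (rule eventually_conj[rotated])
  then obtain \<epsilon> where "0 < \<epsilon>" "\<forall>F\<in>{F. F face_of P}. ?settled \<epsilon> F"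
    using eventually_happens'[OF trivial_limit_at_right_real] by blast
  then show ?thesis using that unfolding probe_generic_def by blast
qed

lemma probe_generic_pos: "probe_generic y \<epsilon> \<Longrightarrow> \<epsilon> > 0"
  unfolding probe_generic_def by blast

lemma probe_generic_settled:
  assumes "probe_generic y \<epsilon>" "F face_of P" "0 < s" "s < \<epsilon>" "probe y s \<in> proj CARD('n) ` F"
    and "0 < s'" "s' < \<epsilon>"
  shows "probe y s' \<in> proj CARD('n) ` F"
  using assms unfolding probe_generic_def probe_settled_def by blast

text \<open>Two points of R over distinct probe points agree in all coordinates but the last two,
  which general position forbids for a face of dimension at most d - 2.\<close>
lemma probe_avoids_low_faces:
  assumes g: "probe_generic y \<epsilon>" and R: "R face_of P" and dim: "aff_dim R \<le> int CARD('n) - 2"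
    and s: "0 < s" "s < \<epsilon>"
  shows "probe y s \<notin> proj CARD('n) ` R"
proof
  assume "probe y s \<in> proj CARD('n) ` R"
  then have probe_in: "probe y s' \<in> proj CARD('n) ` R" if "0 < s'" "s' < \<epsilon>" for s'
    using probe_generic_settled[OF g R s] that by blast
  have \<epsilon>: "\<epsilon> > 0" using probe_generic_pos[OF g] .
  obtain r1 where r1: "r1 \<in> R" "proj CARD('n) r1 = probe y (\<epsilon>/3)" using probe_in[of "\<epsilon>/3"] \<epsilon> by auto
  obtain r2 where r2: "r2 \<in> R" "proj CARD('n) r2 = probe y (2*\<epsilon>/3)" using probe_in[of "2*\<epsilon>/3"] \<epsilon> by auto
  have "R \<noteq> {}" using r1(1) by blast
  then have "aff_dim R \<ge> 0" using aff_dim_negative_iff[of R] by linarith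
  then obtain m where m: "aff_dim R = int m" by (metis nonneg_eq_int)
  have m_le: "m \<le> CARD('n) - 2" using m dim two_le_card by linarith
  then have m_less: "m < CARD('n)" using two_le_card by linarith
  have "projj CARD('n) (CARD('n) - m) r1 = projj CARD('n) (CARD('n) - m) r2"
    unfolding projj_eq_iff[OF less_imp_le[OF m_less]]
  proof (intro allI impI)
    fix i :: 'n assume "rank i < m"
    then have "rank i < CARD('n) - 2" using m_le by linarith
    then have "i \<noteq> last_coord" "i \<noteq> penult_coord"
      using rank_less_card_minus_2_iff[OF two_le_card] by auto
    moreover have "proj CARD('n) r1 $ i = proj CARD('n) r2 $ i"
      using r1(2) r2(2) \<open>i \<noteq> penult_coord\<close> by (simp add: probe_nth)
    ultimately show "r1 $ i = r2 $ i" by (simp add: proj_card_nth)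
  qed
  then have "r1 = r2"
    by (rule inj_onD[OF general_position_inj_on_face[OF P_general_position R m m_less] _ r1(1) r2(1)])
  then have "probe y (\<epsilon>/3) $ penult_coord = probe y (2*\<epsilon>/3) $ penult_coord" using r1 r2 by simp
  then show False using \<epsilon> by (simp add: probe_nth)
qed

lemma mem_Omega_proj_face_iff:
  assumes g: "probe_generic y \<epsilon>" and F: "F face_of P"
  shows "y \<in> Omega (CARD('n) - 1) (proj CARD('n) ` F) \<longleftrightarrow> probe y (\<epsilon>/2) \<in> proj CARD('n) ` F"
proof -
  have \<epsilon>: "\<epsilon> > 0" using probe_generic_pos[OF g] .
  have compact_F: "compact (proj CARD('n) ` F)"
    using compact_continuous_image[OF continuous_on_proj compact_face[OF F]] .
  have convex_F: "convex (proj CARD('n) ` F)"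
    using convex_linear_image linear_proj face_of_imp_convex[OF F] by blast
  note Omega = mem_Omega_proj_iff[OF two_le_card compact_face[OF F]]
  show ?thesis
  proof
    assume "y \<in> Omega (CARD('n) - 1) (proj CARD('n) ` F)"
    then obtain s where s: "y \<in> proj CARD('n) ` F" "s > 0" "probe y s \<in> proj CARD('n) ` F"
      unfolding Omega by blast
    define s' where "s' = min s \<epsilon> / 2"
    have s': "0 < s'" "s' < \<epsilon>" "s' \<le> s" unfolding s'_def using s \<epsilon> by auto
    have "probe y s' \<in> proj CARD('n) ` F"
      using probe_between[OF convex_F _ s(3), of 0 s'] s(1) s' by simp
    then show "probe y (\<epsilon>/2) \<in> proj CARD('n) ` F"
      using probe_generic_settled[OF g F s'(1,2)] \<epsilon> by simp
  next
    assume probe: "probe y (\<epsilon>/2) \<in> proj CARD('n) ` F"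
    have half: "0 < \<epsilon>/2" "\<epsilon>/2 < \<epsilon>" using \<epsilon> by auto
    have "\<forall>s. 0 < s \<and> s < \<epsilon> \<longrightarrow> probe y s \<in> proj CARD('n) ` F"
      using probe_generic_settled[OF g F half probe] by blast
    then have "y \<in> proj CARD('n) ` F"
      using closed_probe_limit[OF compact_imp_closed[OF compact_F] \<epsilon>] by blast
    then show "y \<in> Omega (CARD('n) - 1) (proj CARD('n) ` F)"
      unfolding Omega using probe \<epsilon> half_gt_zero by blast
  qed
qed

lemma vertical_midpoint_interior:
  assumes w: "w \<in> P" and x: "x \<in> P" and same: "proj CARD('n) w = proj CARD('n) x"
    and below: "w $ last_coord < x $ last_coord"
  shows "(1/2) *\<^sub>R w + (1/2) *\<^sub>R x \<in> interior P"
proof (rule ccontr)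
  define m where "m = (1/2) *\<^sub>R w + (1/2) *\<^sub>R x"
  assume "m \<notin> interior P"
  moreover have mP: "m \<in> P" unfolding m_def using convexD[OF P_convex w x] by simp
  ultimately have "m \<in> rel_frontier P"
    unfolding rel_frontier_def rel_interior_P
    using closure_closed compact_imp_closed[OF P_compact] by auto
  then obtain F where F: "F facet_of P" "m \<in> F" using rel_frontier_of_polyhedron[OF P_polyhedron] by blast
  obtain a b where r: "facet_hyperplane P F a b" using facet_has_hyperplane[OF F(1)] .
  have "a \<bullet> m = b" "a \<bullet> w \<le> b" "a \<bullet> x \<le> b" "a $ last_coord \<noteq> 0"
    using r F(2) w x unfolding facet_hyperplane_def by auto
  moreover have "2 * (a \<bullet> m) = a \<bullet> w + a \<bullet> x" unfolding m_def by (simp add: inner_add_right)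
  ultimately have "a \<bullet> x - a \<bullet> w = 0" by linarith
  then have "(x $ last_coord - w $ last_coord) * a $ last_coord = 0"
    using inner_diff_if_proj_eq[OF same[symmetric], of a] by simp
  then show False using \<open>a $ last_coord \<noteq> 0\<close> below by simp
qed

lemma not_mem_Omega_if_probe_outside:
  assumes g: "probe_generic y \<epsilon>" and y: "proj CARD('n) x = y"
    and outside: "probe y (\<epsilon>/2) \<notin> proj CARD('n) ` P"
  shows "x \<notin> Omega CARD('n) P"
proof
  assume "x \<in> Omega CARD('n) P"
  then obtain w where w: "x \<in> P" "w \<in> P" "proj CARD('n) w = proj CARD('n) x"
      "w $ last_coord < x $ last_coord"
    unfolding mem_Omega_card_iff[OF P_compact] lastc_card by blast
  define m where "m = (1/2) *\<^sub>R w + (1/2) *\<^sub>R x"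
  have "m \<in> interior P" unfolding m_def using vertical_midpoint_interior[OF w(2,1,3,4)] .
  then obtain r where r: "r > 0" "ball m r \<subseteq> P" using mem_interior by blast
  have \<epsilon>: "\<epsilon> > 0" using probe_generic_pos[OF g] .
  define s where "s = min r \<epsilon> / 2"
  have s: "0 < s" "s < r" "s < \<epsilon>" unfolding s_def using r(1) \<epsilon> by auto
  have "m - s *\<^sub>R axis penult_coord 1 \<in> P" using s(1,2) r(2) by (auto simp: dist_norm)
  moreover have "proj CARD('n) m = y"
    unfolding m_def using proj_convex_comb[OF w(3) refl, of "1/2"] y by simp
  ultimately have "probe y s \<in> proj CARD('n) ` P"
    using proj_diff_penult_axis[OF two_le_card] by (metis image_eqI)
  then have "probe y (\<epsilon>/2) \<in> proj CARD('n) ` P"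
    using probe_generic_settled[OF g face_of_refl[OF P_convex] s(1,3)] \<epsilon> by simp
  then show False using outside by blast
qed

lemma facet_upper_or_lower:
  assumes "F facet_of P"
  shows "upper_facet P F \<noteq> lower_facet P F"
proof -
  obtain a b where r: "facet_hyperplane P F a b" using facet_has_hyperplane[OF assms] .
  then have "a $ last_coord \<noteq> 0" unfolding facet_hyperplane_def by blast
  then show ?thesis using upper_facet_iff[OF r assms] lower_facet_iff[OF r assms] by auto
qed

lemma facet_sign_upper:
  assumes F: "F facet_of P" and "upper_facet P F"
  shows "facet_sign P F = 1"
proof -
  obtain a b where r: "facet_hyperplane P F a b" using facet_has_hyperplane[OF F] .
  then show ?thesis using facet_sign_eq_sgn[OF r F] upper_facet_iff[OF r F] assms(2) by simp
qed

lemma facet_sign_lower: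
  assumes F: "F facet_of P" and "lower_facet P F"
  shows "facet_sign P F = -1"
proof -
  obtain a b where r: "facet_hyperplane P F a b" using facet_has_hyperplane[OF F] .
  then show ?thesis using facet_sign_eq_sgn[OF r F] lower_facet_iff[OF r F] assms(2) by simp
qed

lemma interior_vertical_step:
  assumes "t \<in> interior P"
  obtains r where "r > 0" "t + r *\<^sub>R axis last_coord 1 \<in> P" "t + (- r) *\<^sub>R axis last_coord 1 \<in> P"
proof -
  obtain r where r: "r > 0" "ball t r \<subseteq> P" using assms mem_interior by blast
  have step: "t + c *\<^sub>R axis last_coord 1 \<in> P" if c: "\<bar>c\<bar> < r" for c
    using c subsetD[OF r(2), of "t + c *\<^sub>R axis last_coord 1"] by (simp add: dist_norm)
  show ?thesis using that[of "r/2"] step[of "r/2"] step[of "- (r/2)"] r(1) by simp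
qed

lemma probe_fibre_boundary_in_facet_interior:
  assumes g: "probe_generic y \<epsilon>" and t: "t \<in> P" "proj CARD('n) t = probe y (\<epsilon>/2)"
    and boundary: "t \<notin> interior P"
  obtains F where "F facet_of P" "t \<in> rel_interior F"
proof -
  have \<epsilon>: "\<epsilon> > 0" using probe_generic_pos[OF g] .
  have "t \<in> rel_frontier P"
    unfolding rel_frontier_def rel_interior_P
    using t(1) boundary closure_closed compact_imp_closed[OF P_compact] by auto
  then obtain F where F: "F facet_of P" "t \<in> F" using rel_frontier_of_polyhedron[OF P_polyhedron] by blast
  have "t \<in> rel_interior F"
  proof (rule ccontr)
    assume "t \<notin> rel_interior F"
    then have "t \<in> rel_frontier F" unfolding rel_frontier_def using F(2) closure_subset by blast
    moreover have "polyhedron F"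
      using face_of_polytope_polytope[OF P_polytope facet_of_imp_face_of[OF F(1)]]
        polytope_imp_polyhedron by blast
    ultimately obtain G where G: "G facet_of F" "t \<in> G" using rel_frontier_of_polyhedron by blast
    have GP: "G face_of P"
      using face_of_trans[OF facet_of_imp_face_of[OF G(1)] facet_of_imp_face_of[OF F(1)]] .
    have "aff_dim G = aff_dim F - 1" using G(1) facet_of_def by blast
    then have "aff_dim G \<le> int CARD('n) - 2" using facet_aff_dim[OF F(1)] by simp
    then have "probe y (\<epsilon>/2) \<notin> proj CARD('n) ` G" using probe_avoids_low_faces[OF g GP] \<epsilon> by simp
    then show False using G(2) t(2) by (metis image_eqI)
  qed
  then show ?thesis using that F(1) by blast
qed

lemma probe_fibre_top_in_upper_facet:
  assumes g: "probe_generic y \<epsilon>" and t: "t \<in> P" "proj CARD('n) t = probe y (\<epsilon>/2)"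
    and top: "\<forall>w\<in>P. proj CARD('n) w = proj CARD('n) t \<longrightarrow> w $ last_coord \<le> t $ last_coord"
  obtains F where "F facet_of P" "upper_facet P F" "t \<in> F"
proof -
  have "t \<notin> interior P"
  proof
    assume "t \<in> interior P"
    then obtain r where "r > 0" "t + r *\<^sub>R axis last_coord 1 \<in> P" by (rule interior_vertical_step)
    then show False using top proj_add_vertical[of t r] by force
  qed
  then obtain F where F: "F facet_of P" "t \<in> rel_interior F"
    using probe_fibre_boundary_in_facet_interior[OF g t] by blast
  obtain a b where r: "facet_hyperplane P F a b" using facet_has_hyperplane[OF F(1)] .
  obtain \<mu> where \<mu>: "\<mu> * a $ last_coord < 0" "t + \<mu> *\<^sub>R axis last_coord 1 \<in> P"
    using facet_vertical_step_inside[OF r F(2)] .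
  have "\<mu> \<le> 0" using top \<mu>(2) proj_add_vertical[of t \<mu>] by force
  then have "upper_facet P F" using upper_facet_iff[OF r F(1)] \<mu>(1) by (simp add: mult_less_0_iff)
  then show ?thesis using that F rel_interior_subset by blast
qed

lemma probe_fibre_bottom_in_lower_facet:
  assumes g: "probe_generic y \<epsilon>" and t: "t \<in> P" "proj CARD('n) t = probe y (\<epsilon>/2)"
    and bottom: "\<forall>w\<in>P. proj CARD('n) w = proj CARD('n) t \<longrightarrow> t $ last_coord \<le> w $ last_coord"
  obtains F where "F facet_of P" "lower_facet P F" "t \<in> F"
proof -
  have "t \<notin> interior P"
  proof
    assume "t \<in> interior P"
    then obtain r where "r > 0" "t + (- r) *\<^sub>R axis last_coord 1 \<in> P" by (rule interior_vertical_step)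
    then show False using bottom proj_add_vertical[of t "- r"] by force
  qed
  then obtain F where F: "F facet_of P" "t \<in> rel_interior F"
    using probe_fibre_boundary_in_facet_interior[OF g t] by blast
  obtain a b where r: "facet_hyperplane P F a b" using facet_has_hyperplane[OF F(1)] .
  obtain \<mu> where \<mu>: "\<mu> * a $ last_coord < 0" "t + \<mu> *\<^sub>R axis last_coord 1 \<in> P"
    using facet_vertical_step_inside[OF r F(2)] .
  have "\<mu> \<ge> 0" using bottom \<mu>(2) proj_add_vertical[of t \<mu>] by force
  then have "lower_facet P F" using lower_facet_iff[OF r F(1)] \<mu>(1) by (simp add: mult_less_0_iff)
  then show ?thesis using that F rel_interior_subset by blast
qed

text \<open>Two distinct facets meet in a face of dimension at most d - 2, which the probe avoids.\<close>
lemma facets_eq_if_meet_over_probe: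
  assumes g: "probe_generic y \<epsilon>" and F: "F facet_of P" and G: "G facet_of P"
    and t: "t \<in> F" "t \<in> G" "proj CARD('n) t = probe y (\<epsilon>/2)"
  shows "F = G"
proof (rule ccontr)
  assume ne: "F \<noteq> G"
  have FG: "(F \<inter> G) face_of P"
    using face_of_Int[OF facet_of_imp_face_of[OF F] facet_of_imp_face_of[OF G]] .
  have "F \<inter> G \<noteq> F"
  proof
    assume "F \<inter> G = F"
    then have "F face_of G" using face_of_subset[OF facet_of_imp_face_of[OF F]] facet_of_imp_subset[OF G] by blast
    then have "aff_dim F < aff_dim G" using face_of_aff_dim_lt[OF face_of_imp_convex[OF facet_of_imp_face_of[OF G]] _ ne] by blast
    then show False using facet_aff_dim[OF F] facet_aff_dim[OF G] by simp
  qed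
  moreover have "(F \<inter> G) face_of F" using face_of_subset[OF FG] facet_of_imp_subset[OF F] by blast
  ultimately have "aff_dim (F \<inter> G) < aff_dim F"
    using face_of_aff_dim_lt[OF face_of_imp_convex[OF facet_of_imp_face_of[OF F]]] by blast
  then have "aff_dim (F \<inter> G) \<le> int CARD('n) - 2" using facet_aff_dim[OF F] by simp
  then have "probe y (\<epsilon>/2) \<notin> proj CARD('n) ` (F \<inter> G)"
    using probe_avoids_low_faces[OF g FG] probe_generic_pos[OF g] by simp
  then show False using t by (metis IntI image_eqI)
qed

lemma probe_hits_two_facets:
  assumes g: "probe_generic y \<epsilon>" and inP: "probe y (\<epsilon>/2) \<in> proj CARD('n) ` P"
  obtains Fp Fm where "Fp facet_of P" "upper_facet P Fp" "Fm facet_of P" "lower_facet P Fm"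
    "\<And>F. F facet_of P \<Longrightarrow> probe y (\<epsilon>/2) \<in> proj CARD('n) ` F \<longleftrightarrow> F = Fp \<or> F = Fm"
proof -
  let ?z = "probe y (\<epsilon>/2)"
  obtain t where t: "t \<in> P" "proj CARD('n) t = ?z"
      "\<forall>w\<in>P. proj CARD('n) w = ?z \<longrightarrow> lastc CARD('n) w \<le> lastc CARD('n) t"
    using fibre_has_highest[OF P_compact inP] .
  obtain b where b: "b \<in> P" "proj CARD('n) b = ?z"
      "\<forall>w\<in>P. proj CARD('n) w = ?z \<longrightarrow> lastc CARD('n) b \<le> lastc CARD('n) w"
    using fibre_has_lowest[OF P_compact inP] .
  have top: "\<forall>w\<in>P. proj CARD('n) w = proj CARD('n) t \<longrightarrow> w $ last_coord \<le> t $ last_coord"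
    using t by (simp add: lastc_card)
  have bottom: "\<forall>w\<in>P. proj CARD('n) w = proj CARD('n) b \<longrightarrow> b $ last_coord \<le> w $ last_coord"
    using b by (simp add: lastc_card)
  obtain Fp where Fp: "Fp facet_of P" "upper_facet P Fp" "t \<in> Fp"
    using probe_fibre_top_in_upper_facet[OF g t(1,2) top] .
  obtain Fm where Fm: "Fm facet_of P" "lower_facet P Fm" "b \<in> Fm"
    using probe_fibre_bottom_in_lower_facet[OF g b(1,2) bottom] .
  have "F = Fp \<or> F = Fm" if F: "F facet_of P" and z: "?z \<in> proj CARD('n) ` F" for F
  proof -
    obtain f where f: "f \<in> F" "proj CARD('n) f = ?z" using z by auto
    have fP: "f \<in> P" using f(1) facet_of_imp_subset[OF F] by blast
    show ?thesis
    proof (cases "upper_facet P F")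
      case True
      then have "t $ last_coord \<le> f $ last_coord" using t(1,2) f unfolding upper_facet_def by auto
      moreover have "f $ last_coord \<le> t $ last_coord" using top fP f(2) t(2) by auto
      ultimately have "f = t" using eq_if_proj_eq_last_eq[of f t] f(2) t(2) by simp
      then show ?thesis using facets_eq_if_meet_over_probe[OF g F Fp(1) f(1) _ f(2)] Fp(3) by simp
    next
      case False
      then have "lower_facet P F" using facet_upper_or_lower[OF F] by blast
      then have "f $ last_coord \<le> b $ last_coord" using b(1,2) f unfolding lower_facet_def by auto
      moreover have "b $ last_coord \<le> f $ last_coord" using bottom fP f(2) b(2) by auto
      ultimately have "f = b" using eq_if_proj_eq_last_eq[of f b] f(2) b(2) by simp
      then show ?thesis using facets_eq_if_meet_over_probe[OF g F Fm(1) f(1) _ f(2)] Fm(3) by simp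
    qed
  qed
  moreover have "?z \<in> proj CARD('n) ` Fp" "?z \<in> proj CARD('n) ` Fm"
    using Fp(3) Fm(3) t(2) b(2) by (metis image_eqI)+
  ultimately show ?thesis using that Fp(1,2) Fm(1,2) by blast
qed

lemma mem_Omega_iff_between:
  assumes gm: "gm \<in> P" "proj CARD('n) gm = proj CARD('n) x"
      "\<forall>w\<in>P. proj CARD('n) w = proj CARD('n) x \<longrightarrow> gm $ last_coord \<le> w $ last_coord"
    and gp: "gp \<in> P" "proj CARD('n) gp = proj CARD('n) x"
      "\<forall>w\<in>P. proj CARD('n) w = proj CARD('n) x \<longrightarrow> w $ last_coord \<le> gp $ last_coord"
  shows "x \<in> Omega CARD('n) P \<longleftrightarrow> gm $ last_coord < x $ last_coord \<and> x $ last_coord \<le> gp $ last_coord"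
proof -
  have "x \<in> P \<longleftrightarrow> gm $ last_coord \<le> x $ last_coord \<and> x $ last_coord \<le> gp $ last_coord"
    using convex_vertical_fibre_iff[OF P_convex gm(1) gp(1) gm(2) gp(2) _ refl] gm(3) gp(3) by blast
  moreover have "(\<exists>w\<in>P. proj CARD('n) w = proj CARD('n) x \<and> w $ last_coord < x $ last_coord)
      \<longleftrightarrow> gm $ last_coord < x $ last_coord"
    using gm by fastforce
  ultimately show ?thesis unfolding mem_Omega_card_iff[OF P_compact] lastc_card by auto
qed

lemma prism_subset_halfspaces:
  assumes F: "facet_hyperplane P F aF bF" and Fk: "facet_hyperplane P Fk ak bk"
  defines "c \<equiv> ak $ last_coord * aF $ last_coord"
  shows "prism (affine hull Fk) F \<subseteq> {w. ak \<bullet> w \<le> bk} \<inter> {w. c * bF \<le> (c *\<^sub>R aF) \<bullet> w}"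
    (is "_ \<subseteq> ?H")
  unfolding prism_def
proof (rule hull_minimal)
  have FP: "F \<subseteq> P" and Fe: "F = P \<inter> {x. aF \<bullet> x = bF}"
    using F unfolding facet_hyperplane_def by auto
  have Pk: "P \<subseteq> {x. ak \<bullet> x \<le> bk}" and affk: "affine hull Fk = {x. ak \<bullet> x = bk}"
    using Fk unfolding facet_hyperplane_def by auto
  have "w \<in> ?H" if w: "w \<in> proj CARD('n) -` proj CARD('n) ` F \<inter> affine hull Fk" for w
  proof -
    obtain f where f: "f \<in> F" "proj CARD('n) f = proj CARD('n) w" using w by force
    have "(f $ last_coord - w $ last_coord) * ak $ last_coord \<le> 0"
      using facet_hyperplane_height_le[OF Fk _ _ f(2)] f(1) FP w by blast
    then have ak: "0 \<le> ak $ last_coord * (w $ last_coord - f $ last_coord)"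
      by (simp add: algebra_simps)
    have "aF \<bullet> f = bF" using f(1) Fe by blast
    then have "aF \<bullet> w - bF = (w $ last_coord - f $ last_coord) * aF $ last_coord"
      using inner_diff_if_proj_eq[OF f(2)[symmetric], of aF] by simp
    then have "c * (aF \<bullet> w) - c * bF =
        (ak $ last_coord * (w $ last_coord - f $ last_coord)) * (aF $ last_coord * aF $ last_coord)"
      unfolding c_def right_diff_distrib[symmetric] by simp
    also have "\<dots> \<ge> 0" using ak by simp
    finally have "c * bF \<le> (c *\<^sub>R aF) \<bullet> w" by simp
    moreover have "ak \<bullet> w = bk" using w affk by blast
    ultimately show "w \<in> ?H" by simp
  qed
  moreover have "F \<subseteq> ?H"
  proof
    fix w assume "w \<in> F"
    then have "ak \<bullet> w \<le> bk" "aF \<bullet> w = bF" using FP Pk Fe by auto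
    then show "w \<in> ?H" by simp
  qed
  ultimately show "F \<union> (proj CARD('n) -` proj CARD('n) ` F \<inter> affine hull Fk) \<subseteq> ?H" by blast
  show "convex ?H" by (intro convex_Int convex_halfspace_le convex_halfspace_ge)
qed

lemma prism_fibre_bounds:
  assumes F: "F facet_of P" and Fk: "facet_hyperplane P Fk ak bk"
    and gF: "gF \<in> F" "proj CARD('n) gF = y" and h: "h \<in> affine hull Fk" "proj CARD('n) h = y"
    and w: "w \<in> prism (affine hull Fk) F" "proj CARD('n) w = y"
  shows "min (gF $ last_coord) (h $ last_coord) \<le> w $ last_coord \<and>
    w $ last_coord \<le> max (gF $ last_coord) (h $ last_coord)"
proof -
  obtain aF bF where rF: "facet_hyperplane P F aF bF" using facet_has_hyperplane[OF F] .
  have aF0: "aF $ last_coord \<noteq> 0" and ak0: "ak $ last_coord \<noteq> 0"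
    and gF_on: "aF \<bullet> gF = bF" and h_on: "ak \<bullet> h = bk"
    using rF Fk gF(1) h(1) unfolding facet_hyperplane_def by auto
  have w_below: "ak \<bullet> w \<le> bk"
    and w_above: "ak $ last_coord * aF $ last_coord * bF \<le> ((ak $ last_coord * aF $ last_coord) *\<^sub>R aF) \<bullet> w"
    using prism_subset_halfspaces[OF rF Fk] w(1) by auto
  have "ak \<bullet> w - ak \<bullet> h = (w $ last_coord - h $ last_coord) * ak $ last_coord"
    using w(2) h(2) by (simp add: inner_diff_if_proj_eq)
  then have below_Fk: "(w $ last_coord - h $ last_coord) * ak $ last_coord \<le> 0"
    using w_below h_on by linarith
  have "0 \<le> ak $ last_coord * aF $ last_coord * (aF \<bullet> w - aF \<bullet> gF)"
    using w_above gF_on by (simp add: right_diff_distrib)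
  also have "aF \<bullet> w - aF \<bullet> gF = (w $ last_coord - gF $ last_coord) * aF $ last_coord"
    using w(2) gF(2) by (simp add: inner_diff_if_proj_eq)
  finally have above_F:
    "0 \<le> (ak $ last_coord * (w $ last_coord - gF $ last_coord)) * (aF $ last_coord * aF $ last_coord)"
    by (simp add: mult_ac)
  have "aF $ last_coord * aF $ last_coord > 0" using aF0 not_real_square_gt_zero by blast
  then have "0 \<le> ak $ last_coord * (w $ last_coord - gF $ last_coord)"
    using above_F by (simp add: zero_le_mult_iff)
  then show ?thesis using below_Fk ak0
    by (cases "ak $ last_coord > 0") (auto simp: mult_le_0_iff zero_le_mult_iff)
qed

lemma mem_rho_plus_prism_iff:
  assumes F: "F facet_of P" and Fk: "facet_hyperplane P Fk ak bk"
    and gF: "gF \<in> F" "proj CARD('n) gF = proj CARD('n) x"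
    and h: "h \<in> affine hull Fk" "proj CARD('n) h = proj CARD('n) x"
  shows "x \<in> rho_plus_set CARD('n) T (prism (affine hull Fk) F) \<longleftrightarrow>
    proj CARD('n) x \<in> T \<and> x $ last_coord \<in> {min (gF $ last_coord) (h $ last_coord) <.. max (gF $ last_coord) (h $ last_coord)}"
proof -
  let ?Q = "prism (affine hull Fk) F"
  have "gF \<in> ?Q" unfolding prism_def using gF(1) by (simp add: hull_inc)
  moreover have "proj CARD('n) h \<in> proj CARD('n) ` F" using gF h by (metis image_eqI)
  then have "h \<in> ?Q" unfolding prism_def using h(1) by (intro hull_inc) simp
  ultimately obtain p q where pq: "p \<in> ?Q" "q \<in> ?Q" "proj CARD('n) p = proj CARD('n) x"
      "proj CARD('n) q = proj CARD('n) x"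
      "p $ last_coord = min (gF $ last_coord) (h $ last_coord)"
      "q $ last_coord = max (gF $ last_coord) (h $ last_coord)"
    using gF(2) h(2) by (metis max_def min_def)
  have "x \<in> ?Q \<and> x \<noteq> nb CARD('n) ?Q (proj CARD('n) x) \<longleftrightarrow>
      p $ last_coord < x $ last_coord \<and> x $ last_coord \<le> q $ last_coord"
  proof (rule rho_plus_vertical_segment[OF _ pq(1-4) _ refl])
    show "convex ?Q" unfolding prism_def by simp
    show "\<forall>w\<in>?Q. proj CARD('n) w = proj CARD('n) x \<longrightarrow>
        p $ last_coord \<le> w $ last_coord \<and> w $ last_coord \<le> q $ last_coord"
      using prism_fibre_bounds[OF F Fk gF h] pq(5,6) by simp
  qed
  then show ?thesis unfolding mem_rho_plus_set_iff pq(5,6) by auto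
qed

lemma rho_plus_prism_self_empty:
  assumes Fk: "facet_hyperplane P Fk ak bk"
  shows "rho_plus_set CARD('n) T (prism (affine hull Fk) Fk) = {}"
proof (rule rho_plus_set_eq_empty_if_fibres_trivial[OF one_le_card order_refl lives_in_card])
  have "prism (affine hull Fk) Fk \<subseteq> affine hull Fk"
    unfolding prism_def by (intro hull_minimal) (auto simp: hull_inc affine_imp_convex)
  then show "u = v" if "u \<in> prism (affine hull Fk) Fk" "v \<in> prism (affine hull Fk) Fk"
      "proj CARD('n) u = proj CARD('n) v" for u v
    using facet_hyperplane_inj_on_affine_hull[OF Fk] that by blast
qed

lemma finite_facets: "finite {F. F facet_of P}"
proof (rule finite_subset[OF _ finite_polytope_faces[OF P_polytope]])
  show "{F. F facet_of P} \<subseteq> {F. F face_of P}" using facet_of_imp_face_of by blast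
qed

lemma indicator_Omega_two_facets:
  assumes Fk: "Fk facet_of P" and g: "probe_generic (proj CARD('n) x) \<epsilon>"
    and Fp: "Fp facet_of P" "upper_facet P Fp" "probe (proj CARD('n) x) (\<epsilon>/2) \<in> proj CARD('n) ` Fp"
    and Fm: "Fm facet_of P" "lower_facet P Fm" "probe (proj CARD('n) x) (\<epsilon>/2) \<in> proj CARD('n) ` Fm"
  defines "summand F \<equiv> facet_sign P F * indicator (rho_plus_set CARD('n)
      (Omega (CARD('n) - 1) (proj CARD('n) ` F)) (prism (affine hull Fk) F)) x"
  shows "indicator (Omega CARD('n) P) x = - facet_sign P Fk * (summand Fp + summand Fm)"
proof -
  let ?y = "proj CARD('n) x"
  have Omega_p: "?y \<in> Omega (CARD('n) - 1) (proj CARD('n) ` Fp)"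
    and Omega_m: "?y \<in> Omega (CARD('n) - 1) (proj CARD('n) ` Fm)"
    using mem_Omega_proj_face_iff[OF g] facet_of_imp_face_of Fp Fm by blast+
  obtain gp gm where gp: "gp \<in> Fp" "proj CARD('n) gp = ?y" and gm: "gm \<in> Fm" "proj CARD('n) gm = ?y"
    using Omega_p Omega_m unfolding Omega_def by auto
  have gpP: "gp \<in> P" and gmP: "gm \<in> P"
    using gp(1) gm(1) facet_of_imp_subset[OF Fp(1)] facet_of_imp_subset[OF Fm(1)] by blast+
  have top: "\<forall>w\<in>P. proj CARD('n) w = ?y \<longrightarrow> w $ last_coord \<le> gp $ last_coord"
    using Fp(2) gp unfolding upper_facet_def by auto
  have bottom: "\<forall>w\<in>P. proj CARD('n) w = ?y \<longrightarrow> gm $ last_coord \<le> w $ last_coord"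
    using Fm(2) gm unfolding lower_facet_def by auto
  obtain ak bk where rk: "facet_hyperplane P Fk ak bk" using facet_has_hyperplane[OF Fk] .
  then have ak0: "ak $ last_coord \<noteq> 0" unfolding facet_hyperplane_def by auto
  obtain h where h: "h \<in> affine hull Fk" "proj CARD('n) h = ?y"
    using facet_hyperplane_point_over[OF rk] .
  have "indicator (Omega CARD('n) P) x =
      (indicator {gm $ last_coord<..gp $ last_coord} (x $ last_coord) :: real)"
    using mem_Omega_iff_between[OF gmP gm(2) bottom gpP gp(2) top] by (simp add: indicator_def)
  moreover have "summand Fp = indicator
      {min (gp $ last_coord) (h $ last_coord)<..max (gp $ last_coord) (h $ last_coord)} (x $ last_coord)"
    using mem_rho_plus_prism_iff[OF Fp(1) rk gp h] Omega_p facet_sign_upper[OF Fp(1,2)]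
    by (simp add: summand_def indicator_def)
  moreover have "summand Fm = - indicator
      {min (gm $ last_coord) (h $ last_coord)<..max (gm $ last_coord) (h $ last_coord)} (x $ last_coord)"
    using mem_rho_plus_prism_iff[OF Fm(1) rk gm h] Omega_m facet_sign_lower[OF Fm(1,2)]
    by (simp add: summand_def indicator_def)
  moreover have "facet_sign P Fk = sgn (ak $ last_coord)" using facet_sign_eq_sgn[OF rk Fk] .
  moreover have "(gp $ last_coord - h $ last_coord) * ak $ last_coord \<le> 0"
    "(gm $ last_coord - h $ last_coord) * ak $ last_coord \<le> 0"
    using facet_hyperplane_height_le[OF rk] gpP gmP gp(2) gm(2) h by auto
  moreover have "gm $ last_coord \<le> gp $ last_coord" using top gmP gm(2) by blast
  ultimately show ?thesis
    using signed_interval_telescope[of "gm $ last_coord" "gp $ last_coord" "ak $ last_coord"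
        "h $ last_coord" "x $ last_coord"] ak0
    by simp
qed

lemma indicator_Omega_eq_facet_sum:
  fixes x :: "(real,'n) vec"
  assumes Fk: "Fk facet_of P"
  defines "summand F \<equiv> facet_sign P F * indicator (rho_plus_set CARD('n)
      (Omega (CARD('n) - 1) (proj CARD('n) ` F)) (prism (affine hull Fk) F)) x"
  shows "indicator (Omega CARD('n) P) x = - facet_sign P Fk * (\<Sum>F\<in>{F. F facet_of P}. summand F)"
proof -
  let ?y = "proj CARD('n) x"
  obtain \<epsilon> where g: "probe_generic ?y \<epsilon>" by (rule probe_generic_exists)
  have inactive: "summand F = 0" if "F facet_of P" "probe ?y (\<epsilon>/2) \<notin> proj CARD('n) ` F" for F
    using mem_Omega_proj_face_iff[OF g facet_of_imp_face_of[OF that(1)]] that(2)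
    by (simp add: summand_def mem_rho_plus_set_iff)
  show ?thesis
  proof (cases "probe ?y (\<epsilon>/2) \<in> proj CARD('n) ` P")
    case False
    then have "\<forall>F\<in>{F. F facet_of P}. summand F = 0"
      using inactive facet_of_imp_subset by blast
    then have "sum summand {F. F facet_of P} = 0" by (rule sum.neutral)
    then show ?thesis using not_mem_Omega_if_probe_outside[OF g refl False] by simp
  next
    case True
    obtain Fp Fm where Fp: "Fp facet_of P" "upper_facet P Fp" and Fm: "Fm facet_of P" "lower_facet P Fm"
      and hit: "\<And>F. F facet_of P \<Longrightarrow> probe ?y (\<epsilon>/2) \<in> proj CARD('n) ` F \<longleftrightarrow> F = Fp \<or> F = Fm"
      using probe_hits_two_facets[OF g True] by blast
    have "Fp \<noteq> Fm" using facet_upper_or_lower[OF Fp(1)] Fp(2) Fm(2) by metis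
    have "probe ?y (\<epsilon>/2) \<in> proj CARD('n) ` Fp" "probe ?y (\<epsilon>/2) \<in> proj CARD('n) ` Fm"
      using hit[OF Fp(1)] hit[OF Fm(1)] by blast+
    then have "indicator (Omega CARD('n) P) x = - facet_sign P Fk * (summand Fp + summand Fm)"
      unfolding summand_def by (rule indicator_Omega_two_facets[OF Fk g Fp _ Fm])
    also have "summand Fp + summand Fm = sum summand {Fp, Fm}" using \<open>Fp \<noteq> Fm\<close> by simp
    also have "\<dots> = sum summand {F. F facet_of P}"
      by (rule sum.mono_neutral_left[OF finite_facets]) (use Fp Fm inactive hit in auto)
    finally show ?thesis .
  qed
qed

end

theorem mainTheorem6:
  fixes P :: "(real^('n::{finite,linorder})) set" and Fk :: "(real^('n::{finite,linorder})) set"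
  assumes "CARD('n) \<ge> 2"
    and "general_position P"
    and "Fk facet_of P"
  shows "\<forall>x :: real^('n::{finite,linorder}).
    indicator (Omega CARD('n) P) x =
      - facet_sign P Fk *
        (\<Sum>F \<in> {F. F facet_of P \<and> F \<noteq> Fk}.
           facet_sign P F *
           indicator
             (rho_plus_set CARD('n) (Omega (CARD('n) - 1) (proj CARD('n) ` F))
                (convex hull (F \<union> (proj CARD('n) -` (proj CARD('n) ` F) \<inter> affine hull Fk))))
             x)"
proof -
  interpret general_position_polytope P using assms(1,2) by unfold_locales
  define summand where "summand x F = facet_sign P F * indicator (rho_plus_set CARD('n)
      (Omega (CARD('n) - 1) (proj CARD('n) ` F)) (prism (affine hull Fk) F)) x" for x F
  obtain ak bk where "facet_hyperplane P Fk ak bk" using facet_has_hyperplane[OF assms(3)] .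
  then have Fk_term: "summand x Fk = 0" for x
    unfolding summand_def using rho_plus_prism_self_empty by simp
  have facets: "{F. F facet_of P} = insert Fk {F. F facet_of P \<and> F \<noteq> Fk}" using assms(3) by blast
  have "sum (summand x) {F. F facet_of P} = sum (summand x) {F. F facet_of P \<and> F \<noteq> Fk}" for x
    using finite_facets Fk_term unfolding facets by simp
  then show ?thesis using indicator_Omega_eq_facet_sum[OF assms(3)] unfolding summand_def prism_def by simp
qed

end
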